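(* Let $u^1,u^2\in\mathcal U_2$ and $u:=u^1\oplus_cu^2$. Then $u\in\mathcal U_2$ and, with $f=f(t,c,x)\in(0,c)$ the function determined by $u_c(t,c,x)=u^1_c(t,f,x)=u^2_c(t,c-f,x)$, $$\frac{u_c}{u_{cc}}(t,c,x)=\frac{u^1_c}{u^1_{cc}}(t,f,x)+\frac{u^2_c}{u^2_{cc}}(t,c-f,x),\qquad \frac{u_{cx^i}}{u_{cc}}(t,c,x)=\frac{u^1_{cx^i}}{u^1_{cc}}(t,f,x)+\frac{u^2_{cx^i}}{u^2_{cc}}(t,c-f,x).$$
   Context: A function on $(0,\infty)$ satisfies the Inada conditions if it is strictly concave, strictly increasing and continuously differentiable on $(0,\infty)$ with derivative tending to $\infty$ at $0$ and to $0$ at $\infty$. $\mathcal U_1$ is the family of measurable real functions $u=u(t,c,x)$ on $[0,1]\times(0,\infty)\times\mathbb R^d$ such that $u(t,\cdot,x)$ satisfies the Inada conditions for each $(t,x)$ and, for some $N=N(u)>0$, $|u(t,e^y,x)|\le e^{N(1+|x|+|y|)}$ for all $(t,x,y)$. $\mathcal U_2$ is the family of $u\in\mathcal U_1$ such that $u_{cc}$ and $u_{cx^i}$ ($i=1,\dots,d$) exist and are continuous in $(c,x)$, $u_{cc}<0$, and for some $N>0$, $-cu_{cc}/u_c+|u_{cx^i}|/u_c\le N$ on $[0,1]\times(0,\infty)\times\mathbb R^d$. The sup-convolution is $(u^1\oplus_cu^2)(t,c,x):=\sup\{u^1(t,c_1,x)+u^2(t,c_2,x):c_1,c_2>0,\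 c_1+c_2=c\}$. *)

theory Defs
  imports "HOL-Analysis.Analysis"
begin

definition strictly_concave_on :: "real set \<Rightarrow> (real \<Rightarrow> real) \<Rightarrow> bool" where
  "strictly_concave_on S g \<longleftrightarrow>
     (\<forall>a\<in>S. \<forall>b\<in>S. \<forall>\<theta>::real. a \<noteq> b \<longrightarrow> 0 < \<theta> \<longrightarrow> \<theta> < 1 \<longrightarrow>
        \<theta> * g a + (1 - \<theta>) * g b < g (\<theta> * a + (1 - \<theta>) * b))"

definition inada :: "(real \<Rightarrow> real) \<Rightarrow> bool" where
  "inada g \<longleftrightarrow>
     strictly_concave_on {0<..} g \<and>
     strict_mono_on {0<..} g \<and>
     (\<forall>c>0. g differentiable (at c)) \<and>
     continuous_on {0<..} (deriv g) \<and>
     filterlim (deriv g) at_top (at_right 0) \<and>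
     ((deriv g) \<longlongrightarrow> 0) at_top"

definition u_c :: "(real \<Rightarrow> real \<Rightarrow> real^'d \<Rightarrow> real) \<Rightarrow> real \<Rightarrow> real \<Rightarrow> real^'d \<Rightarrow> real" where
  "u_c u t c x = deriv (\<lambda>c'. u t c' x) c"

definition u_cc :: "(real \<Rightarrow> real \<Rightarrow> real^'d \<Rightarrow> real) \<Rightarrow> real \<Rightarrow> real \<Rightarrow> real^'d \<Rightarrow> real" where
  "u_cc u t c x = deriv (\<lambda>c'. u_c u t c' x) c"

definition u_cx :: "(real \<Rightarrow> real \<Rightarrow> real^'d \<Rightarrow> real) \<Rightarrow> 'd \<Rightarrow> real \<Rightarrow> real \<Rightarrow> real^'d \<Rightarrow> real" where
  "u_cx u i t c x = deriv (\<lambda>s. u_c u t c (x + s *\<^sub>R axis i 1)) 0"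

definition U1 :: "(real \<Rightarrow> real \<Rightarrow> real^'d \<Rightarrow> real) set" where
  "U1 = {u. (\<lambda>(t, c, x). u t c x) \<in>
              borel_measurable (restrict_space borel ({0..1} \<times> {0<..} \<times> UNIV)) \<and>
            (\<forall>t\<in>{0..1}. \<forall>x. inada (\<lambda>c. u t c x)) \<and>
            (\<exists>N>0. \<forall>t\<in>{0..1}. \<forall>x y.
               \<bar>u t (exp y) x\<bar> \<le> exp (N * (1 + norm x + \<bar>y\<bar>)))}"

definition U2 :: "(real \<Rightarrow> real \<Rightarrow> real^'d \<Rightarrow> real) set" where
  "U2 = {u. u \<in> U1 \<and>
            (\<forall>t\<in>{0..1}. \<forall>c>0. \<forall>x. (\<lambda>c'. u_c u t c' x) differentiable (at c)) \<and>
            (\<forall>t\<in>{0..1}. \<forall>c>0. \<forall>x. \<forall>i.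
               (\<lambda>s. u_c u t c (x + s *\<^sub>R axis i 1)) differentiable (at 0)) \<and>
            (\<forall>t\<in>{0..1}. continuous_on ({0<..} \<times> UNIV) (\<lambda>(c, x). u_cc u t c x)) \<and>
            (\<forall>t\<in>{0..1}. \<forall>i. continuous_on ({0<..} \<times> UNIV) (\<lambda>(c, x). u_cx u i t c x)) \<and>
            (\<forall>t\<in>{0..1}. \<forall>c>0. \<forall>x. u_cc u t c x < 0) \<and>
            (\<exists>N>0. \<forall>t\<in>{0..1}. \<forall>c>0. \<forall>x. \<forall>i.
               - c * u_cc u t c x / u_c u t c x + \<bar>u_cx u i t c x\<bar> / u_c u t c x \<le> N)}"

definition supconv :: "(real \<Rightarrow> real \<Rightarrow> 'x \<Rightarrow> real) \<Rightarrow> (real \<Rightarrow> real \<Rightarrow> 'x \<Rightarrow> real)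
                        \<Rightarrow> real \<Rightarrow> real \<Rightarrow> 'x \<Rightarrow> real" where
  "supconv u1 u2 t c x =
     Sup {u1 t c1 x + u2 t c2 x | c1 c2. c1 > 0 \<and> c2 > 0 \<and> c1 + c2 = c}"

end

theory Submission
  imports Defs
begin

text \<open>Fix \<open>t\<close> and \<open>x\<close> and write \<open>v\<^sub>i = u\<^sub>i(t, -, x)\<close>. By strict concavity and the
  Inada conditions the marginal gap \<open>v\<^sub>1'(a) - v\<^sub>2'(c - a)\<close> decreases strictly from \<open>+\<infinity>\<close>
  to \<open>-\<infinity>\<close> on \<open>(0, c)\<close>, so it has a unique zero \<open>f(c, x)\<close>, and by concavity this split
  attains the sup-convolution. The envelope theorem gives \<open>u\<^sub>c = v\<^sub>1'(f)\<close>; differentiating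
  the implicit equation for \<open>f\<close> in \<open>c\<close> and along the coordinate axes in \<open>x\<close> gives
  \<open>u\<^sub>c\<^sub>c = A B / (A + B)\<close> and \<open>u\<^sub>c\<^sub>x = (B X\<^sub>1 + A X\<^sub>2) / (A + B)\<close>, where \<open>A\<close>, \<open>B\<close> are
  the second and \<open>X\<^sub>1\<close>, \<open>X\<^sub>2\<close> the mixed derivatives of \<open>u\<^sub>1\<close>, \<open>u\<^sub>2\<close> at the split. These
  formulas are the claimed identities and give the \<open>U2\<close> bound; continuity of \<open>f\<close> in
  \<open>(c, x)\<close>, needed for both differentiations, is continuity of roots of a jointly continuous
  decreasing family. Measurability holds because the supremum may be taken over rational splits.\<close>

lemma MVT_either_order:
  fixes f f' :: "real \<Rightarrow> real"
  assumes "\<And>z. min x y \<le> z \<Longrightarrow> z \<le> max x y \<Longrightarrow> (f has_real_derivative f' z) (at z)"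
  shows "\<exists>z. min x y \<le> z \<and> z \<le> max x y \<and> f y - f x = (y - x) * f' z"
proof (cases x y rule: linorder_cases)
  case less
  then obtain z where "x < z" "z < y" "f y - f x = (y - x) * f' z"
    using MVT2[of x y f f'] assms by auto
  then show ?thesis by (intro exI[of _ z]) auto
next
  case greater
  then obtain z where "y < z" "z < x" "f x - f y = (x - y) * f' z"
    using MVT2[of y x f f'] assms by auto
  then show ?thesis by (intro exI[of _ z]) (auto simp: algebra_simps)
qed auto

text \<open>Joint continuity of \<open>Ga\<close> makes the Carath\'eodory slopes of \<open>G\<close> along the curve \<open>a\<close>
  converge; this replaces joint differentiability in the implicit function theorem and chain rule.\<close>
lemma joint_slope_tendsto:
  fixes G Ga :: "real \<Rightarrow> real \<Rightarrow> real" and a :: "real \<Rightarrow> real"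
  assumes "r > 0"
    and der: "\<And>b s. \<bar>b - a0\<bar> < r \<Longrightarrow> \<bar>s - s0\<bar> < r \<Longrightarrow> ((\<lambda>b. G b s) has_real_derivative Ga b s) (at b)"
    and cont: "isCont (\<lambda>p. Ga (fst p) (snd p)) (a0, s0)"
    and a_lim: "(a \<longlongrightarrow> a0) (at s0)"
  obtains Q where "(Q \<longlongrightarrow> Ga a0 s0) (at s0)" "\<And>s. G (a s) s - G a0 s = Q s * (a s - a0)"
proof
  define Q where "Q s = (if a s = a0 then Ga a0 s else (G (a s) s - G a0 s) / (a s - a0))" for s
  show "G (a s) s - G a0 s = Q s * (a s - a0)" for s
    by (simp add: Q_def)
  show "(Q \<longlongrightarrow> Ga a0 s0) (at s0)"
  proof (rule tendstoI)
    fix e :: real assume "e > 0"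
    with cont obtain d where "d > 0"
      and d: "\<And>p. dist p (a0, s0) < d \<Longrightarrow> dist (Ga (fst p) (snd p)) (Ga a0 s0) < e"
      unfolding continuous_at_eps_delta by fastforce
    define m where "m = min d r / 2"
    have m: "m > 0" "2 * m \<le> d" "m < r" using \<open>d > 0\<close> \<open>r > 0\<close> by (auto simp: m_def)
    have near: "\<forall>\<^sub>F s in at s0. dist (a s) a0 < m" using a_lim m(1) by (rule tendstoD)
    have "\<forall>\<^sub>F s in at s0. dist s s0 < m" using m(1) eventually_at by blast
    with near show "\<forall>\<^sub>F s in at s0. dist (Q s) (Ga a0 s0) < e"
    proof eventually_elim
      case (elim s)
      have close: "dist (b, s) (a0, s0) < d" if "\<bar>b - a0\<bar> \<le> m" for b
      proof -
        have "dist (b, s) (a0, s0) \<le> norm (b - a0) + norm (s - s0)"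
          using norm_Pair_le[of "b - a0" "s - s0"] by (simp add: dist_norm)
        also have "\<dots> < d" using that elim m by (auto simp: dist_real_def)
        finally show ?thesis .
      qed
      show ?case
      proof (cases "a s = a0")
        case True
        then show ?thesis using d[OF close[of a0]] m by (simp add: Q_def)
      next
        case False
        obtain z where z: "min a0 (a s) \<le> z" "z \<le> max a0 (a s)" "G (a s) s - G a0 s = (a s - a0) * Ga z s"
          using MVT_either_order[of a0 "a s" "\<lambda>b. G b s" "\<lambda>b. Ga b s"] der elim m
          by (force simp: dist_real_def)
        then have "\<bar>z - a0\<bar> \<le> m" using elim by (auto simp: dist_real_def)
        with z show ?thesis using d[OF close[of z]] False elim by (simp add: Q_def dist_real_def)
      qed
    qed
  qed
qed

lemma implicit_function_has_derivative:
  fixes G Ga :: "real \<Rightarrow> real \<Rightarrow> real" and a :: "real \<Rightarrow> real"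
  assumes "r > 0"
    and "\<And>b s. \<bar>b - a0\<bar> < r \<Longrightarrow> \<bar>s - s0\<bar> < r \<Longrightarrow> ((\<lambda>b. G b s) has_real_derivative Ga b s) (at b)"
    and "isCont (\<lambda>p. Ga (fst p) (snd p)) (a0, s0)"
    and "(a \<longlongrightarrow> a0) (at s0)" and a0: "a s0 = a0"
    and zero: "\<forall>\<^sub>F s in at s0. G (a s) s = 0" and zero0: "G a0 s0 = 0"
    and Gs: "((\<lambda>s. G a0 s) has_real_derivative Gs0) (at s0)"
    and nz: "Ga a0 s0 \<noteq> 0"
  shows "(a has_real_derivative - Gs0 / Ga a0 s0) (at s0)"
proof -
  obtain Q where Q: "(Q \<longlongrightarrow> Ga a0 s0) (at s0)" and QG: "\<And>s. G (a s) s - G a0 s = Q s * (a s - a0)"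
    using joint_slope_tendsto assms(1-4) by blast
  have "((\<lambda>s. - ((G a0 s - G a0 s0) / (s - s0)) / Q s) \<longlongrightarrow> - Gs0 / Ga a0 s0) (at s0)"
    using Gs Q nz by (intro tendsto_intros) (auto simp: has_field_derivative_iff)
  moreover have "\<forall>\<^sub>F s in at s0. - ((G a0 s - G a0 s0) / (s - s0)) / Q s = (a s - a s0) / (s - s0)"
    using zero tendsto_imp_eventually_ne[OF Q nz] eventually_neq_at_within[of s0 s0 UNIV]
  proof eventually_elim
    case (elim s)
    then have "G a0 s = - (Q s * (a s - a0))" using QG[of s] by simp
    then show ?case using elim zero0 a0 by simp
  qed
  ultimately show ?thesis
    unfolding has_field_derivative_iff by (rule Lim_transform_eventually)
qed

lemma partial_chain_rule:
  fixes G Ga :: "real \<Rightarrow> real \<Rightarrow> real" and a :: "real \<Rightarrow> real"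
  assumes "r > 0"
    and "\<And>b s. \<bar>b - a0\<bar> < r \<Longrightarrow> \<bar>s - s0\<bar> < r \<Longrightarrow> ((\<lambda>b. G b s) has_real_derivative Ga b s) (at b)"
    and "isCont (\<lambda>p. Ga (fst p) (snd p)) (a0, s0)"
    and a0: "a s0 = a0"
    and a': "(a has_real_derivative a') (at s0)"
    and Gs: "((\<lambda>s. G a0 s) has_real_derivative Gs0) (at s0)"
  shows "((\<lambda>s. G (a s) s) has_real_derivative Ga a0 s0 * a' + Gs0) (at s0)"
proof -
  have "(a \<longlongrightarrow> a0) (at s0)"
    using DERIV_isCont[OF a'] a0 by (simp add: isCont_def)
  then obtain Q where Q: "(Q \<longlongrightarrow> Ga a0 s0) (at s0)" and QG: "\<And>s. G (a s) s - G a0 s = Q s * (a s - a0)"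
    using joint_slope_tendsto assms(1-3) by blast
  have "((\<lambda>s. Q s * ((a s - a s0) / (s - s0)) + (G a0 s - G a0 s0) / (s - s0))
      \<longlongrightarrow> Ga a0 s0 * a' + Gs0) (at s0)"
    using Q a' Gs by (intro tendsto_intros) (auto simp: has_field_derivative_iff)
  moreover have "\<forall>\<^sub>F s in at s0. Q s * ((a s - a s0) / (s - s0)) + (G a0 s - G a0 s0) / (s - s0)
      = (G (a s) s - G (a s0) s0) / (s - s0)"
    using eventually_neq_at_within[of s0 s0 UNIV]
  proof eventually_elim
    case (elim s)
    have "Q s * ((a s - a s0) / (s - s0)) + (G a0 s - G a0 s0) / (s - s0)
        = (Q s * (a s - a0) + (G a0 s - G a0 s0)) / (s - s0)"
      using a0 by (simp add: add_divide_distrib)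
    then show ?case using QG[of s] a0 by simp
  qed
  ultimately show ?thesis
    unfolding has_field_derivative_iff by (rule Lim_transform_eventually)
qed

lemma decreasing_root_tendsto:
  fixes \<psi> :: "'p \<Rightarrow> real \<Rightarrow> real" and \<Psi> :: "real \<Rightarrow> real" and r hi :: "'p \<Rightarrow> real"
  assumes \<rho>: "0 < \<rho>" "\<rho> < H"
    and \<Psi>_decr: "\<And>a b. 0 < a \<Longrightarrow> a < b \<Longrightarrow> b < H \<Longrightarrow> \<Psi> b < \<Psi> a" and \<Psi>_\<rho>: "\<Psi> \<rho> = 0"
    and \<psi>_lim: "\<And>a. 0 < a \<Longrightarrow> a < H \<Longrightarrow> ((\<lambda>p. \<psi> p a) \<longlongrightarrow> \<Psi> a) F"
    and hi_lim: "(hi \<longlongrightarrow> H) F"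
    and root: "\<forall>\<^sub>F p in F. 0 < r p \<and> r p < hi p \<and> \<psi> p (r p) = 0 \<and>
       (\<forall>a b. 0 < a \<longrightarrow> a < b \<longrightarrow> b < hi p \<longrightarrow> \<psi> p b < \<psi> p a)"
  shows "(r \<longlongrightarrow> \<rho>) F"
proof (rule tendstoI)
  fix e :: real assume "e > 0"
  define \<epsilon> where "\<epsilon> = min e (min \<rho> (H - \<rho>)) / 2"
  have \<epsilon>: "0 < \<epsilon>" "\<epsilon> < e" "\<epsilon> < \<rho>" "\<rho> + \<epsilon> < H"
    using \<open>e > 0\<close> \<rho> by (auto simp: \<epsilon>_def min_def field_simps)
  have "\<Psi> \<rho> < \<Psi> (\<rho> - \<epsilon>)" "\<Psi> (\<rho> + \<epsilon>) < \<Psi> \<rho>"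
    using \<epsilon> by (auto intro!: \<Psi>_decr)
  then have "\<forall>\<^sub>F p in F. 0 < \<psi> p (\<rho> - \<epsilon>)" "\<forall>\<^sub>F p in F. \<psi> p (\<rho> + \<epsilon>) < 0"
    using \<psi>_lim[of "\<rho> - \<epsilon>"] \<psi>_lim[of "\<rho> + \<epsilon>"] \<epsilon> \<Psi>_\<rho> \<rho>
    by (auto intro: order_tendstoD)
  moreover have "\<forall>\<^sub>F p in F. \<rho> + \<epsilon> < hi p" using hi_lim \<epsilon> by (auto intro: order_tendstoD)
  ultimately show "\<forall>\<^sub>F p in F. dist (r p) \<rho> < e"
    using root
  proof eventually_elim
    case (elim p)
    then have decr: "\<And>a b. 0 < a \<Longrightarrow> a < b \<Longrightarrow> b < hi p \<Longrightarrow> \<psi> p b < \<psi> p a"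
      and r: "0 < r p" "r p < hi p" "\<psi> p (r p) = 0" by auto
    have "\<not> r p \<le> \<rho> - \<epsilon>"
      using decr[of "r p" "\<rho> - \<epsilon>"] elim r \<epsilon> by (cases "r p = \<rho> - \<epsilon>") auto
    moreover have "\<not> \<rho> + \<epsilon> \<le> r p"
      using decr[of "\<rho> + \<epsilon>" "r p"] elim r \<epsilon> \<rho> by (cases "r p = \<rho> + \<epsilon>") auto
    ultimately show ?case using \<epsilon> by (simp add: dist_real_def abs_less_iff)
  qed
qed

lemma abs_le_l1_by_partials:
  fixes g :: "real^'n \<Rightarrow> real" and g' :: "'n \<Rightarrow> real^'n \<Rightarrow> real"
  assumes der: "\<And>y i. (\<And>k. \<bar>y$k - x0$k\<bar> \<le> \<bar>x$k - x0$k\<bar>) \<Longrightarrow>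
      ((\<lambda>s. g (y + s *\<^sub>R axis i 1)) has_real_derivative g' i y) (at 0)"
    and bnd: "\<And>y i. (\<And>k. \<bar>y$k - x0$k\<bar> \<le> \<bar>x$k - x0$k\<bar>) \<Longrightarrow> \<bar>g' i y\<bar> \<le> M"
  shows "\<bar>g x - g x0\<bar> \<le> M * (\<Sum>k\<in>UNIV. \<bar>x$k - x0$k\<bar>)"
proof -
  define mix where "mix S = (\<chi> k. if k \<in> S then x$k else x0$k)" for S
  have "\<bar>g (mix S) - g x0\<bar> \<le> M * (\<Sum>k\<in>S. \<bar>x$k - x0$k\<bar>)" if "finite S" for S
    using that
  proof (induction S rule: finite_induct)
    case empty
    then show ?case by (simp add: mix_def vec_eq_iff)
  next
    case (insert j S)
    define \<delta> where "\<delta> = x$j - x0$j"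
    define \<phi> where "\<phi> s = g (mix S + s *\<^sub>R axis j 1)" for s
    have in_box: "\<bar>(mix S + z *\<^sub>R axis j 1)$k - x0$k\<bar> \<le> \<bar>x$k - x0$k\<bar>" if "\<bar>z\<bar> \<le> \<bar>\<delta>\<bar>" for z k
      using that insert.hyps(2) by (auto simp: mix_def axis_def \<delta>_def)
    have \<phi>': "(\<phi> has_real_derivative g' j (mix S + z *\<^sub>R axis j 1)) (at z)" if "\<bar>z\<bar> \<le> \<bar>\<delta>\<bar>" for z
      using der[OF in_box[OF that], of j] DERIV_shift[of \<phi> _ 0 z]
      by (simp add: \<phi>_def scaleR_add_left add_ac)
    have "\<exists>z. min 0 \<delta> \<le> z \<and> z \<le> max 0 \<delta> \<and> \<phi> \<delta> - \<phi> 0 = (\<delta> - 0) * g' j (mix S + z *\<^sub>R axis j 1)"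
      by (rule MVT_either_order, rule \<phi>') auto
    then obtain z where "min 0 \<delta> \<le> z" "z \<le> max 0 \<delta>"
      and z: "\<phi> \<delta> - \<phi> 0 = \<delta> * g' j (mix S + z *\<^sub>R axis j 1)"
      by auto
    then have z_le: "\<bar>z\<bar> \<le> \<bar>\<delta>\<bar>" by linarith
    then have "\<bar>\<phi> \<delta> - \<phi> 0\<bar> \<le> M * \<bar>\<delta>\<bar>"
      using z bnd[OF in_box[OF z_le], of j] by (simp add: abs_mult mult.commute[of M] mult_left_mono)
    moreover have "mix (insert j S) = mix S + \<delta> *\<^sub>R axis j 1"
      using insert.hyps(2) by (auto simp: mix_def \<delta>_def vec_eq_iff axis_def)
    then have "g (mix (insert j S)) - g x0 = (\<phi> \<delta> - \<phi> 0) + (g (mix S) - g x0)"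
      by (simp add: \<phi>_def)
    ultimately show ?case
      using insert.IH insert.hyps abs_triangle_ineq[of "\<phi> \<delta> - \<phi> 0" "g (mix S) - g x0"]
      by (simp add: \<delta>_def distrib_left)
  qed
  from this[of UNIV] show ?thesis by (simp add: mix_def vec_eq_iff)
qed

lemma eventually_bounded_isCont:
  fixes h :: "'i::finite \<Rightarrow> 'a::t2_space \<Rightarrow> real"
  assumes "\<And>i. isCont (h i) p0"
  shows "\<exists>M. \<forall>\<^sub>F p in nhds p0. \<forall>i. \<bar>h i p\<bar> \<le> M"
proof -
  define M where "M = (\<Sum>i\<in>UNIV. \<bar>h i p0\<bar>) + 1"
  have "((\<lambda>p. \<bar>h i p\<bar>) \<longlongrightarrow> \<bar>h i p0\<bar>) (nhds p0)" for i
    using assms[of i] by (intro tendsto_rabs) (simp add: isCont_def tendsto_at_iff_tendsto_nhds)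
  then have near: "\<forall>\<^sub>F p in nhds p0. \<bar>h i p\<bar> < \<bar>h i p0\<bar> + 1" for i
    by (rule order_tendstoD) simp
  have le_sum: "\<bar>h i p0\<bar> \<le> (\<Sum>i\<in>UNIV. \<bar>h i p0\<bar>)" for i
    by (rule member_le_sum) auto
  have "\<forall>\<^sub>F p in nhds p0. \<bar>h i p\<bar> \<le> M" for i
    using near[of i]
  proof eventually_elim
    case (elim p)
    then show ?case using le_sum[of i] unfolding M_def by linarith
  qed
  then have "\<forall>\<^sub>F p in nhds p0. \<forall>i. \<bar>h i p\<bar> \<le> M"
    by (rule eventually_all_finite)
  then show ?thesis by blast
qed

lemma eventually_abs_le_l1_by_partials:
  fixes h :: "real \<Rightarrow> real^'n \<Rightarrow> real" and hx :: "'n \<Rightarrow> real \<Rightarrow> real^'n \<Rightarrow> real"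
  assumes S: "open S" "c0 \<in> S"
    and hxd: "\<And>c x i. c \<in> S \<Longrightarrow> ((\<lambda>s. h c (x + s *\<^sub>R axis i 1)) has_real_derivative hx i c x) (at 0)"
    and hxc: "\<And>i. isCont (\<lambda>p. hx i (fst p) (snd p)) (c0, x0)"
  shows "\<exists>M. \<forall>\<^sub>F p in at (c0, x0).
    \<bar>h (fst p) (snd p) - h (fst p) x0\<bar> \<le> M * (\<Sum>k\<in>UNIV. \<bar>snd p $ k - x0 $ k\<bar>)"
proof -
  obtain M where "\<forall>\<^sub>F p in nhds (c0, x0). \<forall>i. \<bar>hx i (fst p) (snd p)\<bar> \<le> M"
    using eventually_bounded_isCont[where h="\<lambda>i p. hx i (fst p) (snd p)", OF hxc] by blast
  moreover have "\<forall>\<^sub>F p in nhds (c0, x0). p \<in> S \<times> UNIV"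
    using S by (intro eventually_nhds_in_open open_Times) auto
  ultimately have "\<forall>\<^sub>F p in nhds (c0, x0). (\<forall>i. \<bar>hx i (fst p) (snd p)\<bar> \<le> M) \<and> fst p \<in> S"
    by eventually_elim auto
  then obtain d where "d > 0"
    and d: "\<And>p. dist p (c0, x0) < d \<Longrightarrow> (\<forall>i. \<bar>hx i (fst p) (snd p)\<bar> \<le> M) \<and> fst p \<in> S"
    unfolding eventually_nhds_metric by blast
  define l1 where "l1 x = (\<Sum>k\<in>UNIV. \<bar>x$k - x0$k\<bar>)" for x :: "real^'n"
  have lipschitz: "\<bar>h c x - h c x0\<bar> \<le> M * l1 x" if "\<bar>c - c0\<bar> < d/2" "l1 x < d/2" for c x
    unfolding l1_def
  proof (rule abs_le_l1_by_partials)
    fix y assume box: "\<And>k. \<bar>y$k - x0$k\<bar> \<le> \<bar>x$k - x0$k\<bar>"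
    have "norm (y - x0) \<le> (\<Sum>k\<in>UNIV. \<bar>y$k - x0$k\<bar>)"
      using norm_le_l1_cart[of "y - x0"] by simp
    also have "\<dots> \<le> l1 x"
      unfolding l1_def by (rule sum_mono) (rule box)
    finally have "dist (c, y) (c0, x0) < d"
      using norm_Pair_le[of "c - c0" "y - x0"] that by (simp add: dist_norm)
    then have "\<forall>i. \<bar>hx i c y\<bar> \<le> M" "c \<in> S" using d by auto
    then show "((\<lambda>s. h c (y + s *\<^sub>R axis i 1)) has_real_derivative hx i c y) (at 0)"
      and "\<bar>hx i c y\<bar> \<le> M" for i
      using hxd by auto
  qed
  have "isCont (\<lambda>p. l1 (snd p)) (c0, x0)" unfolding l1_def by (intro continuous_intros)
  then have "\<forall>\<^sub>F p in at (c0, x0). l1 (snd p) < d/2"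
    using order_tendstoD(2)[of "\<lambda>p. l1 (snd p)" 0 _ "d/2"] \<open>d > 0\<close> by (simp add: isCont_def l1_def)
  moreover have "\<forall>\<^sub>F p in at (c0, x0). \<bar>fst p - c0\<bar> < d/2"
    using tendsto_fst[OF tendsto_ident_at[of "(c0, x0)" UNIV]] \<open>d > 0\<close>
    by (auto dest!: tendstoD[of _ _ _ "d/2"] simp: dist_real_def)
  ultimately have "\<forall>\<^sub>F p in at (c0, x0). \<bar>h (fst p) (snd p) - h (fst p) x0\<bar> \<le> M * l1 (snd p)"
    by eventually_elim (simp add: lipschitz)
  then show ?thesis unfolding l1_def by blast
qed

lemma isCont_by_partials:
  fixes h :: "real \<Rightarrow> real^'n \<Rightarrow> real" and hx :: "'n \<Rightarrow> real \<Rightarrow> real^'n \<Rightarrow> real"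
  assumes "open S" "c0 \<in> S"
    and hc: "isCont (\<lambda>c. h c x0) c0"
    and "\<And>c x i. c \<in> S \<Longrightarrow> ((\<lambda>s. h c (x + s *\<^sub>R axis i 1)) has_real_derivative hx i c x) (at 0)"
    and "\<And>i. isCont (\<lambda>p. hx i (fst p) (snd p)) (c0, x0)"
  shows "isCont (\<lambda>p. h (fst p) (snd p)) (c0, x0)"
proof -
  obtain M where M: "\<forall>\<^sub>F p in at (c0, x0).
      norm (h (fst p) (snd p) - h (fst p) x0) \<le> M * (\<Sum>k\<in>UNIV. \<bar>snd p $ k - x0 $ k\<bar>)"
    using eventually_abs_le_l1_by_partials[OF assms(1,2,4,5)] by auto
  have "isCont (\<lambda>p. M * (\<Sum>k\<in>UNIV. \<bar>snd p $ k - x0 $ k\<bar>)) (c0, x0)" by (intro continuous_intros)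
  then have "((\<lambda>p. h (fst p) (snd p) - h (fst p) x0) \<longlongrightarrow> 0) (at (c0, x0))"
    using Lim_null_comparison[OF M] by (simp add: isCont_def)
  moreover have "(fst \<longlongrightarrow> c0) (at (c0, x0))"
    using tendsto_fst[OF tendsto_ident_at[of "(c0, x0)" UNIV]] by simp
  then have "((\<lambda>p. h (fst p) x0) \<longlongrightarrow> h c0 x0) (at (c0, x0))"
    by (rule isCont_tendsto_compose[OF hc])
  ultimately have "((\<lambda>p. (h (fst p) (snd p) - h (fst p) x0) + h (fst p) x0) \<longlongrightarrow> 0 + h c0 x0) (at (c0, x0))"
    by (rule tendsto_add)
  then show ?thesis unfolding isCont_def by simp
qed

lemma isCont_compose_pair:
  fixes G :: "'a::metric_space \<Rightarrow> 'b::metric_space \<Rightarrow> 'c::metric_space"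
  assumes "isCont (\<lambda>q. G (fst q) (snd q)) (\<alpha> z, \<beta> z)" "isCont \<alpha> z" "isCont \<beta> z"
  shows "isCont (\<lambda>p. G (\<alpha> p) (\<beta> p)) z"
  using isCont_o2[OF continuous_Pair[OF assms(2,3)] assms(1)] by simp

lemma isCont_compose_pos:
  fixes g :: "real \<Rightarrow> 'b::metric_space \<Rightarrow> real"
  assumes g: "\<And>c y. 0 < c \<Longrightarrow> isCont (\<lambda>q. g (fst q) (snd q)) (c, y)"
    and "isCont \<alpha> z" "isCont \<beta> z" "0 < \<alpha> z"
  shows "isCont (\<lambda>p. g (\<alpha> p) (\<beta> p)) z"
  using isCont_compose_pair[where G=g, OF g[OF assms(4)] assms(2,3)] .

lemma isCont_at_pos:
  fixes g :: "real \<Rightarrow> real^'d \<Rightarrow> real"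
  assumes "continuous_on ({0<..} \<times> UNIV) (\<lambda>(c, x). g c x)" "0 < c0"
  shows "isCont (\<lambda>p. g (fst p) (snd p)) (c0, x0)"
proof -
  have "open ({0::real<..} \<times> (UNIV :: (real^'d) set))" by (intro open_Times) auto
  then have "isCont (\<lambda>(c, x). g c x) (c0, x0)"
    using assms continuous_on_eq_continuous_at by fastforce
  then show ?thesis by (simp add: case_prod_beta')
qed

lemma isCont_pos_cong:
  fixes g h :: "real \<Rightarrow> real^'d \<Rightarrow> real"
  assumes "0 < c0" "\<And>c x. 0 < c \<Longrightarrow> g c x = h c x" "isCont (\<lambda>p. h (fst p) (snd p)) (c0, x0)"
  shows "isCont (\<lambda>p. g (fst p) (snd p)) (c0, x0)"
proof -
  have "\<forall>\<^sub>F p in nhds (c0, x0). p \<in> {0<..} \<times> UNIV"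
    using assms(1) by (intro eventually_nhds_in_open open_Times) auto
  then have "\<forall>\<^sub>F p in nhds (c0, x0). h (fst p) (snd p) = g (fst p) (snd p)"
    by eventually_elim (auto simp: assms(2))
  then show ?thesis using assms(3) by (rule isCont_cong[THEN iffD1])
qed

text \<open>For \<open>A, B < 0\<close>, \<open>A B / (A + B)\<close> lies between \<open>max A B\<close> and 0,
  and \<open>(B X1 + A X2) / (A + B)\<close> is a convex combination of \<open>X1\<close> and \<open>X2\<close>.\<close>
lemma harmonic_ratio_bound:
  fixes A B D f g X1 X2 N1 N2 :: real
  assumes "A < 0" "B < 0" "0 < D" "0 < f" "0 < g"
    and "- f * A / D + \<bar>X1\<bar> / D \<le> N1" and "- g * B / D + \<bar>X2\<bar> / D \<le> N2"
  shows "- (f + g) * (A * B / (A + B)) / D + \<bar>(B * X1 + A * X2) / (A + B)\<bar> / D \<le> N1 + N2"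
proof -
  have AB: "A \<le> A * B / (A + B)" "B \<le> A * B / (A + B)"
    using assms(1,2) by (simp_all add: field_simps)
  have "f * A \<le> f * (A * B / (A + B))" "g * B \<le> g * (A * B / (A + B))"
    using mult_left_mono[OF AB(1), of f] mult_left_mono[OF AB(2), of g] assms(4,5) by auto
  then have lin: "- (f + g) * (A * B / (A + B)) \<le> - f * A - g * B"
    by (simp only: distrib_right mult_minus_left)
  have w: "0 < B / (A + B)" "0 < A / (A + B)" "B / (A + B) + A / (A + B) = 1"
    using assms(1,2) by (auto simp: divide_neg_neg add_divide_distrib[symmetric])
  have "\<bar>(B * X1 + A * X2) / (A + B)\<bar> = \<bar>B / (A + B) * X1 + A / (A + B) * X2\<bar>"
    by (simp add: add_divide_distrib)
  also have "\<dots> \<le> B / (A + B) * \<bar>X1\<bar> + A / (A + B) * \<bar>X2\<bar>"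
    using abs_triangle_ineq[of "B / (A + B) * X1" "A / (A + B) * X2"]
    by (simp only: abs_mult abs_of_pos[OF w(1)] abs_of_pos[OF w(2)])
  also have "\<dots> \<le> \<bar>X1\<bar> + \<bar>X2\<bar>"
    using w by (intro add_mono mult_left_le_one_le) auto
  finally have "- (f + g) * (A * B / (A + B)) + \<bar>(B * X1 + A * X2) / (A + B)\<bar>
      \<le> (- f * A + \<bar>X1\<bar>) + (- g * B + \<bar>X2\<bar>)"
    using lin by linarith
  from divide_right_mono[OF this, of D] assms(3)
  have "(- (f + g) * (A * B / (A + B)) + \<bar>(B * X1 + A * X2) / (A + B)\<bar>) / D
      \<le> ((- f * A + \<bar>X1\<bar>) + (- g * B + \<bar>X2\<bar>)) / D" by simp
  then show ?thesis using assms(6,7) unfolding add_divide_distrib by linarith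
qed

lemma harmonic_ratio_identities:
  fixes A B D X1 X2 :: real
  assumes "A \<noteq> 0" "B \<noteq> 0" "A + B \<noteq> 0"
  shows "D / (A * B / (A + B)) = D / A + D / B"
    and "((B * X1 + A * X2) / (A + B)) / (A * B / (A + B)) = X1 / A + X2 / B"
proof -
  show "D / (A * B / (A + B)) = D / A + D / B"
    using assms by (simp add: field_simps)
  have "((B * X1 + A * X2) / (A + B)) / (A * B / (A + B)) = (B * X1 + A * X2) / (A * B)"
    using assms by simp
  also have "\<dots> = X1 / A + X2 / B"
    using assms by (simp add: field_simps)
  finally show "((B * X1 + A * X2) / (A + B)) / (A * B / (A + B)) = X1 / A + X2 / B" .
qed

locale inada_utility =
  fixes v v' v'' :: "real \<Rightarrow> real"
  assumes v': "\<And>c. 0 < c \<Longrightarrow> (v has_real_derivative v' c) (at c)"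
    and v'': "\<And>c. 0 < c \<Longrightarrow> (v' has_real_derivative v'' c) (at c)"
    and v''_neg: "\<And>c. 0 < c \<Longrightarrow> v'' c < 0"
    and v''_cont: "continuous_on {0<..} v''"
    and v'_at_0: "filterlim v' at_top (at_right 0)"
    and v'_at_top: "(v' \<longlongrightarrow> 0) at_top"
    and v_concave: "strictly_concave_on {0<..} v"
begin

lemma v'_strict_antimono: "0 < a \<Longrightarrow> a < b \<Longrightarrow> v' b < v' a"
proof (rule DERIV_neg_imp_decreasing[of a b v'])
  fix x assume "0 < a" "a \<le> x"
  then have "0 < x" by simp
  then show "\<exists>y. (v' has_real_derivative y) (at x) \<and> y < 0" using v'' v''_neg by blast
qed

lemma v'_antimono: "0 < a \<Longrightarrow> a \<le> b \<Longrightarrow> v' b \<le> v' a"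
  using v'_strict_antimono by (cases "a = b") (auto simp: less_le)

lemma v'_pos: "0 < c \<Longrightarrow> 0 < v' c"
proof (rule ccontr)
  assume "0 < c" "\<not> 0 < v' c"
  then have "v' (c + 1) < 0" using v'_strict_antimono[of c "c + 1"] by simp
  from order_tendstoD(1)[OF v'_at_top this]
  have "\<forall>\<^sub>F y in at_top. v' (c + 1) < v' y \<and> c + 1 < y"
    using eventually_gt_at_top[of "c + 1"] by (rule eventually_conj)
  then obtain N where "\<And>y. N \<le> y \<Longrightarrow> v' (c + 1) < v' y \<and> c + 1 < y"
    unfolding eventually_at_top_linorder by blast
  then obtain y where "v' (c + 1) < v' y" "c + 1 < y" by blast
  then show False using v'_strict_antimono[of "c + 1" y] \<open>0 < c\<close> by simp
qed

lemma v_strict_mono: "0 < a \<Longrightarrow> a < b \<Longrightarrow> v a < v b"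
proof (rule DERIV_pos_imp_increasing[of a b v])
  fix x assume "0 < a" "a \<le> x"
  then have "0 < x" by simp
  then show "\<exists>y. (v has_real_derivative y) (at x) \<and> 0 < y" using v' v'_pos by blast
qed

lemma v_mono: "0 < a \<Longrightarrow> a \<le> b \<Longrightarrow> v a \<le> v b"
  using v_strict_mono by (cases "a = b") (auto simp: less_le)

lemma v_le_tangent:
  assumes "0 < a" "0 < b"
  shows "v a \<le> v b + v' b * (a - b)"
proof -
  obtain z where z: "min b a \<le> z" "z \<le> max b a" "v a - v b = (a - b) * v' z"
    using MVT_either_order[of b a v v'] v' assms by force
  have "0 < z" using z(1) assms by linarith
  consider "a \<le> b" "z \<le> b" | "b \<le> a" "b \<le> z" using z by linarith
  then have "(a - b) * v' z \<le> (a - b) * v' b"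
  proof cases
    case 1
    then show ?thesis using v'_antimono[of z b] \<open>0 < z\<close> by (simp add: mult_left_mono_neg)
  next
    case 2
    then show ?thesis using v'_antimono[of b z] assms by (simp add: mult_left_mono)
  qed
  then show ?thesis using z(3) by (simp add: algebra_simps)
qed

lemma concave_ineq:
  assumes "0 < a" "0 < b" "0 < \<theta>" "\<theta> < 1"
  shows "\<theta> * v a + (1 - \<theta>) * v b \<le> v (\<theta> * a + (1 - \<theta>) * b)"
proof (cases "a = b")
  case False
  then show ?thesis using v_concave assms unfolding strictly_concave_on_def by fastforce
qed (simp add: algebra_simps)

lemma isCont_v: "0 < c \<Longrightarrow> isCont v c"
  using DERIV_isCont[OF v'] .

lemma isCont_v': "0 < c \<Longrightarrow> isCont v' c"
  using DERIV_isCont[OF v''] .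

lemma isCont_v'': "0 < c \<Longrightarrow> isCont v'' c"
  using v''_cont continuous_on_eq_continuous_at[of "{0<..}" v''] by auto

lemma v'_shift_has_derivative:
  "0 < s - k \<Longrightarrow> ((\<lambda>s. v' (s - k)) has_real_derivative v'' (s - k)) (at s)"
proof -
  assume "0 < s - k"
  have "((\<lambda>s. s - k) has_real_derivative 1) (at s)" by (auto intro!: derivative_eq_intros)
  from DERIV_chain2[OF v''[OF \<open>0 < s - k\<close>] this] show ?thesis by simp
qed

lemma v'_reflect_has_derivative:
  "0 < s - b \<Longrightarrow> ((\<lambda>b. v' (s - b)) has_real_derivative - v'' (s - b)) (at b)"
proof -
  assume "0 < s - b"
  have "((\<lambda>b. s - b) has_real_derivative -1) (at b)" by (auto intro!: derivative_eq_intros)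
  from DERIV_chain2[OF v''[OF \<open>0 < s - b\<close>] this] show ?thesis by simp
qed

end

definition split_point :: "(real \<Rightarrow> real) \<Rightarrow> (real \<Rightarrow> real) \<Rightarrow> real \<Rightarrow> real" where
  "split_point d1 d2 c = (THE a. 0 < a \<and> a < c \<and> d1 a = d2 (c - a))"

definition sup_convolution :: "(real \<Rightarrow> real) \<Rightarrow> (real \<Rightarrow> real) \<Rightarrow> real \<Rightarrow> real" where
  "sup_convolution v1 v2 c = Sup {v1 c1 + v2 c2 | c1 c2. c1 > 0 \<and> c2 > 0 \<and> c1 + c2 = c}"

locale inada_pair = o1: inada_utility v1 v1' v1'' + o2: inada_utility v2 v2' v2''
  for v1 v1' v1'' v2 v2' v2'' :: "real \<Rightarrow> real"
begin

abbreviation share :: "real \<Rightarrow> real" where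
  "share \<equiv> split_point v1' v2'"

lemma split_point_exists:
  assumes "0 < c"
  shows "\<exists>a. 0 < a \<and> a < c \<and> v1' a = v2' (c - a)"
proof -
  obtain b1 where "b1 > 0" and b1: "\<And>a. 0 < a \<Longrightarrow> a < b1 \<Longrightarrow> v2' (c/2) < v1' a"
    using o1.v'_at_0 unfolding filterlim_at_top_dense eventually_at_right_field by blast
  obtain b2 where "b2 > 0" and b2: "\<And>a. 0 < a \<Longrightarrow> a < b2 \<Longrightarrow> v1' (c/2) < v2' a"
    using o2.v'_at_0 unfolding filterlim_at_top_dense eventually_at_right_field by blast
  define a1 where "a1 = min (b1/2) (c/4)"
  define a2 where "a2 = c - min (b2/2) (c/4)"
  have a12: "0 < a1" "a1 < c/2" "c/2 < a2" "a2 < c" "a1 < b1" "c - a2 < b2"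
    using \<open>b1 > 0\<close> \<open>b2 > 0\<close> assms by (auto simp: a1_def a2_def)
  have "v2' (c - a1) - v1' a1 < 0"
    using b1[of a1] o2.v'_antimono[of "c/2" "c - a1"] a12 by auto
  moreover have "0 < v2' (c - a2) - v1' a2"
    using b2[of "c - a2"] o1.v'_antimono[of "c/2" a2] a12 by auto
  moreover have "continuous_on {a1..a2} (\<lambda>a. v2' (c - a) - v1' a)"
    using a12 by (intro continuous_at_imp_continuous_on ballI continuous_intros
        isCont_o2[OF _ o2.isCont_v'] o1.isCont_v') auto
  ultimately obtain a where "a1 \<le> a" "a \<le> a2" "v2' (c - a) - v1' a = 0"
    using IVT'[of "\<lambda>a. v2' (c - a) - v1' a" a1 0 a2] a12 by auto
  then show ?thesis using a12 by (intro exI[of _ a]) auto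
qed

lemma marginal_gap_strict_antimono:
  "0 < a \<Longrightarrow> a < b \<Longrightarrow> b < c \<Longrightarrow> v1' b - v2' (c - b) < v1' a - v2' (c - a)"
  using o1.v'_strict_antimono[of a b] o2.v'_strict_antimono[of "c - b" "c - a"] by simp

lemma marginal_gap_has_derivative:
  "0 < b \<Longrightarrow> b < c \<Longrightarrow> ((\<lambda>b. v1' b - v2' (c - b)) has_real_derivative v1'' b + v2'' (c - b)) (at b)"
  using DERIV_diff[OF o1.v'' o2.v'_reflect_has_derivative[of c b]] by simp

lemma split_point_unique:
  assumes "0 < a" "a < c" "v1' a = v2' (c - a)" "0 < b" "b < c" "v1' b = v2' (c - b)"
  shows "a = b"
proof (rule ccontr)
  assume "a \<noteq> b"
  then consider "a < b" | "b < a" by linarith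
  then show False
    by cases (use assms marginal_gap_strict_antimono[of _ _ c] in force)+
qed

lemma share_root:
  assumes "0 < c"
  shows "0 < share c \<and> share c < c \<and> v1' (share c) = v2' (c - share c)"
proof -
  have "\<exists>!a. 0 < a \<and> a < c \<and> v1' a = v2' (c - a)"
    using split_point_exists[OF assms] split_point_unique by blast
  then show ?thesis unfolding split_point_def by (rule theI')
qed

lemma share_eqI:
  assumes "0 < a" "a < c" "v1' a = v2' (c - a)"
  shows "a = share c"
  using share_root[of c] assms split_point_unique[of a c "share c"] by auto

lemma share_maximizes:
  assumes "0 < a" "a < c"
  shows "v1 a + v2 (c - a) \<le> v1 (share c) + v2 (c - share c)"
proof -
  have f: "0 < share c" "share c < c" "v1' (share c) = v2' (c - share c)"
    using share_root assms by auto
  have "v1 a \<le> v1 (share c) + v1' (share c) * (a - share c)"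
    using assms f by (intro o1.v_le_tangent) auto
  moreover have "v2 (c - a) \<le> v2 (c - share c) + v2' (c - share c) * ((c - a) - (c - share c))"
    using assms f by (intro o2.v_le_tangent) auto
  ultimately show ?thesis using f(3) by (simp add: algebra_simps)
qed

lemma sup_convolution_eq:
  assumes "0 < c"
  shows "sup_convolution v1 v2 c = v1 (share c) + v2 (c - share c)"
  unfolding sup_convolution_def
proof (rule cSup_eq_maximum)
  show "v1 (share c) + v2 (c - share c) \<in> {v1 c1 + v2 c2 |c1 c2. 0 < c1 \<and> 0 < c2 \<and> c1 + c2 = c}"
    using share_root[OF assms] by force
next
  fix x assume "x \<in> {v1 c1 + v2 c2 |c1 c2. 0 < c1 \<and> 0 < c2 \<and> c1 + c2 = c}"
  then obtain c1 c2 where "x = v1 c1 + v2 c2" "0 < c1" "0 < c2" "c1 + c2 = c" by blast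
  then show "x \<le> v1 (share c) + v2 (c - share c)"
    using share_maximizes[of c1 c] by (simp add: eq_diff_eq[symmetric])
qed

lemma sup_convolution_ge:
  "0 < a \<Longrightarrow> a < c \<Longrightarrow> v1 a + v2 (c - a) \<le> sup_convolution v1 v2 c"
  using share_maximizes sup_convolution_eq by simp

lemma isCont_share:
  assumes "0 < c0"
  shows "isCont share c0"
  unfolding isCont_def
proof (rule decreasing_root_tendsto[where \<psi>="\<lambda>c a. v1' a - v2' (c - a)" and hi="\<lambda>c. c"])
  show "0 < share c0" "share c0 < c0" "v1' (share c0) - v2' (c0 - share c0) = 0"
    using share_root[OF assms] by auto
  show "((\<lambda>c. v1' a - v2' (c - a)) \<longlongrightarrow> v1' a - v2' (c0 - a)) (at c0)" if "0 < a" "a < c0" for a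
    using that by (intro tendsto_intros isCont_tendsto_compose[OF o2.isCont_v']) auto
  show "((\<lambda>c. c) \<longlongrightarrow> c0) (at c0)" by (rule tendsto_ident_at)
  have "\<forall>\<^sub>F c in at c0. 0 < c"
    using order_tendstoD(1)[OF tendsto_ident_at assms] by simp
  then show "\<forall>\<^sub>F c in at c0. 0 < share c \<and> share c < c \<and> v1' (share c) - v2' (c - share c) = 0 \<and>
      (\<forall>a b. 0 < a \<longrightarrow> a < b \<longrightarrow> b < c \<longrightarrow> v1' b - v2' (c - b) < v1' a - v2' (c - a))"
    by eventually_elim (use share_root marginal_gap_strict_antimono in auto)
qed (use marginal_gap_strict_antimono in auto)

lemma share_has_derivative:
  assumes "0 < c0"
  shows "(share has_real_derivative
      v2'' (c0 - share c0) / (v1'' (share c0) + v2'' (c0 - share c0))) (at c0)"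
proof -
  define f0 where "f0 = share c0"
  have f0: "0 < f0" "f0 < c0" "v1' f0 = v2' (c0 - f0)" using share_root[OF assms] unfolding f0_def by auto
  define r where "r = min f0 (c0 - f0) / 2"
  have r: "0 < r" "r < f0" "2 * r \<le> c0 - f0" using f0 by (auto simp: r_def)
  have "(share has_real_derivative - (- v2'' (c0 - f0)) / (v1'' f0 + v2'' (c0 - f0))) (at c0)"
  proof (rule implicit_function_has_derivative
      [where G="\<lambda>b s. v1' b - v2' (s - b)" and Ga="\<lambda>b s. v1'' b + v2'' (s - b)", OF r(1)])
    fix b s :: real assume "\<bar>b - f0\<bar> < r" "\<bar>s - c0\<bar> < r"
    then show "((\<lambda>b. v1' b - v2' (s - b)) has_real_derivative v1'' b + v2'' (s - b)) (at b)"
      using r by (intro marginal_gap_has_derivative) auto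
  next
    have "isCont (\<lambda>p. v1'' (fst p)) (f0, c0)"
      using f0 by (intro isCont_o2[OF _ o1.isCont_v'']) (auto intro: continuous_intros)
    moreover have "isCont (\<lambda>p. v2'' (snd p - fst p)) (f0, c0)"
      using f0 by (intro isCont_o2[OF _ o2.isCont_v'']) (auto intro: continuous_intros)
    ultimately show "isCont (\<lambda>p. v1'' (fst p) + v2'' (snd p - fst p)) (f0, c0)"
      by (intro continuous_intros)
  next
    show "(share \<longlongrightarrow> f0) (at c0)" using isCont_share[OF assms] unfolding isCont_def f0_def .
    show "\<forall>\<^sub>F s in at c0. v1' (share s) - v2' (s - share s) = 0"
      using order_tendstoD(1)[OF tendsto_ident_at[of c0 UNIV] assms]
      by (rule eventually_mono) (use share_root in simp)
    show "((\<lambda>s. v1' f0 - v2' (s - f0)) has_real_derivative - v2'' (c0 - f0)) (at c0)"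
      using f0 o2.v'_shift_has_derivative[of c0 f0] by (auto intro!: derivative_eq_intros)
    show "v1'' f0 + v2'' (c0 - f0) \<noteq> 0" using o1.v''_neg[of f0] o2.v''_neg[of "c0 - f0"] f0 by simp
  qed (use f0 in \<open>simp_all add: f0_def\<close>)
  then show ?thesis unfolding f0_def by simp
qed

lemma v1'_share_has_derivative:
  assumes "0 < c"
  shows "((\<lambda>c. v1' (share c)) has_real_derivative
      v1'' (share c) * v2'' (c - share c) / (v1'' (share c) + v2'' (c - share c))) (at c)"
  using DERIV_chain2[OF o1.v'' share_has_derivative[OF assms]] share_root[OF assms] by simp

text \<open>Envelope theorem: the marginal effect of \<open>c\<close> on the optimal allocation cancels out.\<close>
lemma sup_convolution_has_derivative:
  assumes "0 < c"
  shows "(sup_convolution v1 v2 has_real_derivative v1' (share c)) (at c)"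
proof -
  define f where "f = share c"
  define f' where "f' = v2'' (c - f) / (v1'' f + v2'' (c - f))"
  have f: "0 < f" "f < c" "v1' f = v2' (c - f)" using share_root[OF assms] unfolding f_def by auto
  have share': "(share has_real_derivative f') (at c)"
    using share_has_derivative[OF assms] unfolding f'_def f_def .
  have "((\<lambda>c. c - share c) has_real_derivative 1 - f') (at c)"
    by (intro DERIV_diff DERIV_ident share')
  from DERIV_chain2[OF o2.v' this]
  have "((\<lambda>c. v2 (c - share c)) has_real_derivative v2' (c - f) * (1 - f')) (at c)"
    using f unfolding f_def by simp
  then have "((\<lambda>c. v1 (share c) + v2 (c - share c)) has_real_derivative
      v1' f * f' + v2' (c - f) * (1 - f')) (at c)"
    using DERIV_chain2[OF o1.v' share'] f unfolding f_def by (intro DERIV_add) auto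
  then have "((\<lambda>c. v1 (share c) + v2 (c - share c)) has_real_derivative v1' f) (at c)"
    using f by (simp add: algebra_simps)
  then show ?thesis unfolding f_def
    by (rule has_field_derivative_transform_within_open[where S="{0<..}"])
      (use assms sup_convolution_eq in auto)
qed
lemma deriv_sup_convolution: "0 < c \<Longrightarrow> deriv (sup_convolution v1 v2) c = v1' (share c)"
  by (rule DERIV_imp_deriv) (rule sup_convolution_has_derivative)

lemma sup_convolution_le: "0 < c \<Longrightarrow> sup_convolution v1 v2 c \<le> v1 c + v2 c"
  using sup_convolution_eq[of c] share_root[of c] o1.v_mono[of "share c" c] o2.v_mono[of "c - share c" c]
  by simp

lemma sup_convolution_ge_half: "0 < c \<Longrightarrow> v1 (c/2) + v2 (c/2) \<le> sup_convolution v1 v2 c"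
  using sup_convolution_ge[of "c/2" c] by simp

text \<open>The convex combination of the optimal allocations at \<open>a\<close> and \<open>b\<close> is feasible at the
  convex combination of \<open>a\<close> and \<open>b\<close>, and the two allocations differ in at least one component.\<close>
lemma strictly_concave_sup_convolution: "strictly_concave_on {0<..} (sup_convolution v1 v2)"
  unfolding strictly_concave_on_def
proof (intro ballI allI impI)
  fix a b \<theta> :: real
  assume a: "a \<in> {0<..}" and b: "b \<in> {0<..}" and "a \<noteq> b" and \<theta>: "0 < \<theta>" "\<theta> < 1"
  define fa fb where "fa = share a" and "fb = share b"
  have f: "0 < fa" "fa < a" "0 < fb" "fb < b" using share_root a b unfolding fa_def fb_def by auto
  define m c1 where "m = \<theta> * a + (1 - \<theta>) * b" and "c1 = \<theta> * fa + (1 - \<theta>) * fb"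
  have c1: "0 < c1" "c1 < m"
    using \<theta> f unfolding c1_def m_def by (smt (verit) mult_pos_pos mult_strict_left_mono)+
  have m_c1: "m - c1 = \<theta> * (a - fa) + (1 - \<theta>) * (b - fb)"
    unfolding m_def c1_def by (simp add: algebra_simps)
  have i1: "\<theta> * v1 fa + (1 - \<theta>) * v1 fb \<le> v1 c1"
    unfolding c1_def using f \<theta> by (intro o1.concave_ineq) auto
  have i2: "\<theta> * v2 (a - fa) + (1 - \<theta>) * v2 (b - fb) \<le> v2 (m - c1)"
    unfolding m_c1 using f \<theta> by (intro o2.concave_ineq) auto
  have strict: "\<theta> * v1 fa + (1 - \<theta>) * v1 fb < v1 c1 \<or> \<theta> * v2 (a - fa) + (1 - \<theta>) * v2 (b - fb) < v2 (m - c1)"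
  proof (cases "fa = fb")
    case True
    then have "a - fa \<noteq> b - fb" using \<open>a \<noteq> b\<close> by simp
    then show ?thesis using o2.v_concave f \<theta> unfolding strictly_concave_on_def m_c1 by auto
  next
    case False
    then show ?thesis using o1.v_concave f \<theta> unfolding strictly_concave_on_def c1_def by auto
  qed
  have "\<theta> * sup_convolution v1 v2 a + (1 - \<theta>) * sup_convolution v1 v2 b
      = (\<theta> * v1 fa + (1 - \<theta>) * v1 fb) + (\<theta> * v2 (a - fa) + (1 - \<theta>) * v2 (b - fb))"
    using sup_convolution_eq[of a] sup_convolution_eq[of b] a b
    unfolding fa_def fb_def by (simp add: algebra_simps)
  also have "\<dots> < v1 c1 + v2 (m - c1)" using i1 i2 strict by linarith
  also have "\<dots> \<le> sup_convolution v1 v2 m" using c1 by (rule sup_convolution_ge)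
  finally show "\<theta> * sup_convolution v1 v2 a + (1 - \<theta>) * sup_convolution v1 v2 b
      < sup_convolution v1 v2 (\<theta> * a + (1 - \<theta>) * b)"
    unfolding m_def .
qed

lemma strict_mono_on_sup_convolution: "strict_mono_on {0<..} (sup_convolution v1 v2)"
proof (rule strict_mono_onI)
  fix a b :: real assume a: "a \<in> {0<..}" and "a < b"
  have f: "0 < share a" "share a < a" using share_root a by auto
  have "sup_convolution v1 v2 a = v1 (share a) + v2 (a - share a)" using sup_convolution_eq a by simp
  also have "\<dots> < v1 (share a) + v2 (b - share a)"
    using o2.v_strict_mono[of "a - share a" "b - share a"] f \<open>a < b\<close> by simp
  also have "\<dots> \<le> sup_convolution v1 v2 b" using sup_convolution_ge[of "share a" b] f \<open>a < b\<close> by simp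
  finally show "sup_convolution v1 v2 a < sup_convolution v1 v2 b" .
qed

lemma continuous_on_deriv_sup_convolution: "continuous_on {0<..} (deriv (sup_convolution v1 v2))"
proof (intro continuous_at_imp_continuous_on ballI)
  fix c :: real assume "c \<in> {0<..}"
  then have "\<forall>\<^sub>F y in nhds c. v1' (share y) = deriv (sup_convolution v1 v2) y"
    unfolding eventually_nhds using deriv_sup_convolution by (intro exI[of _ "{0<..}"]) auto
  moreover have "isCont (\<lambda>y. v1' (share y)) c"
    using \<open>c \<in> {0<..}\<close> share_root by (intro isCont_o2[OF isCont_share o1.isCont_v']) auto
  ultimately show "isCont (deriv (sup_convolution v1 v2)) c"
    by (rule isCont_cong[THEN iffD1])
qed

lemma deriv_sup_convolution_at_0: "filterlim (deriv (sup_convolution v1 v2)) at_top (at_right 0)"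
proof (rule filterlim_at_top_mono[OF o1.v'_at_0])
  show "\<forall>\<^sub>F c in at_right 0. v1' c \<le> deriv (sup_convolution v1 v2) c"
    using eventually_at_right_less[of "0::real"]
  proof eventually_elim
    case (elim c)
    have "0 < share c" "share c < c" using share_root[OF elim] by auto
    then have "v1' c \<le> v1' (share c)" using o1.v'_antimono by simp
    then show ?case using deriv_sup_convolution[OF elim] by simp
  qed
qed

lemma deriv_sup_convolution_at_top: "(deriv (sup_convolution v1 v2) \<longlongrightarrow> 0) at_top"
proof (rule tendsto_sandwich[where f="\<lambda>_. 0" and h="\<lambda>c. v1' (c/2) + v2' (c/2)"])
  have half: "filterlim (\<lambda>c::real. c / 2) at_top at_top"
    unfolding filterlim_at_top
    by (auto intro: eventually_mono[OF eventually_ge_at_top[of "2 * _"]])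
  show "((\<lambda>c. v1' (c/2) + v2' (c/2)) \<longlongrightarrow> 0) at_top"
    using tendsto_add[OF filterlim_compose[OF o1.v'_at_top half] filterlim_compose[OF o2.v'_at_top half]]
    by simp
  show "\<forall>\<^sub>F c in at_top. 0 \<le> deriv (sup_convolution v1 v2) c"
    using eventually_gt_at_top[of "0::real"]
    by eventually_elim (use deriv_sup_convolution share_root o1.v'_pos in \<open>fastforce intro: less_imp_le\<close>)
  show "\<forall>\<^sub>F c in at_top. deriv (sup_convolution v1 v2) c \<le> v1' (c/2) + v2' (c/2)"
    using eventually_gt_at_top[of "0::real"]
  proof eventually_elim
    case (elim c)
    have f: "0 < share c" "share c < c" "v1' (share c) = v2' (c - share c)" using share_root[OF elim] by auto
    have "v1' (share c) \<le> v1' (c/2) + v2' (c/2)"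
    proof (cases "c/2 \<le> share c")
      case True
      then show ?thesis using o1.v'_antimono[of "c/2" "share c"] o2.v'_pos[of "c/2"] elim by simp
    next
      case False
      then show ?thesis using o2.v'_antimono[of "c/2" "c - share c"] o1.v'_pos[of "c/2"] elim f by simp
    qed
    then show ?case using deriv_sup_convolution[OF elim] by simp
  qed
qed simp

lemma inada_sup_convolution: "inada (sup_convolution v1 v2)"
  unfolding inada_def real_differentiable_def
  using strictly_concave_sup_convolution strict_mono_on_sup_convolution sup_convolution_has_derivative
    continuous_on_deriv_sup_convolution deriv_sup_convolution_at_0 deriv_sup_convolution_at_top
  by blast

end

text \<open>Rational candidates for the share, pushed into \<open>(0, c)\<close>: they turn the sup-convolution
  into a countable supremum.\<close>
definition clip_share :: "real \<Rightarrow> real \<Rightarrow> real" where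
  "clip_share q c = (if 0 < q \<and> q < c then q else c / 2)"

lemma clip_share_bounds: "0 < c \<Longrightarrow> 0 < clip_share q c \<and> clip_share q c < c"
  by (simp add: clip_share_def)

lemma clip_share_measurable [measurable]:
  "(\<lambda>c. clip_share q c) \<in> borel_measurable borel"
  unfolding clip_share_def by measurable

lemma (in inada_pair) sup_convolution_SUP_Rats:
  assumes "0 < c"
  shows "sup_convolution v1 v2 c = (SUP q\<in>\<rat>. v1 (clip_share q c) + v2 (c - clip_share q c))"
    (is "_ = (SUP q\<in>\<rat>. ?w q)")
proof (rule antisym)
  have le: "?w q \<le> sup_convolution v1 v2 c" for q
    using sup_convolution_ge clip_share_bounds[OF assms] by blast
  then have bdd: "bdd_above (?w ` \<rat>)" unfolding bdd_above_def by blast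
  show "(SUP q\<in>\<rat>. ?w q) \<le> sup_convolution v1 v2 c"
    by (rule cSUP_least) (use le in auto)
  show "sup_convolution v1 v2 c \<le> (SUP q\<in>\<rat>. ?w q)"
  proof (rule field_le_epsilon)
    fix e :: real assume "0 < e"
    define f where "f = share c"
    have f: "0 < f" "f < c" using share_root[OF assms] by (auto simp: f_def)
    have "isCont (\<lambda>q. v1 q + v2 (c - q)) f"
      using f by (intro continuous_intros o1.isCont_v isCont_o2[OF _ o2.isCont_v]) auto
    then obtain \<delta> where "\<delta> > 0"
      and \<delta>: "\<And>q. dist q f < \<delta> \<Longrightarrow> dist (v1 q + v2 (c - q)) (v1 f + v2 (c - f)) < e"
      unfolding continuous_at_eps_delta using \<open>0 < e\<close> by blast
    obtain q where q: "q \<in> \<rat>" "max 0 (f - \<delta>) < q" "q < min c (f + \<delta>)"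
      using Rats_dense_in_real[of "max 0 (f - \<delta>)" "min c (f + \<delta>)"] f \<open>\<delta> > 0\<close> by auto
    then have "sup_convolution v1 v2 c < ?w q + e"
      using \<delta>[of q] sup_convolution_eq[OF assms]
      by (auto simp: f_def clip_share_def dist_real_def abs_less_iff)
    also have "?w q \<le> (SUP q\<in>\<rat>. ?w q)" by (rule cSUP_upper[OF q(1) bdd])
    finally show "sup_convolution v1 v2 c \<le> (SUP q\<in>\<rat>. ?w q) + e" by simp
  qed
qed

lemma measurable_reparam_consumption:
  fixes u :: "real \<Rightarrow> real \<Rightarrow> real^'d \<Rightarrow> real"
  defines "M \<equiv> restrict_space borel ({0..1} \<times> {0<..} \<times> UNIV)"
  assumes u: "(\<lambda>(t, c, x). u t c x) \<in> borel_measurable M"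
    and \<phi>[measurable]: "\<phi> \<in> borel_measurable borel" and pos: "\<And>c. 0 < c \<Longrightarrow> 0 < \<phi> c"
  shows "(\<lambda>(t, c, x). u t (\<phi> c) x) \<in> borel_measurable M"
proof -
  have "(\<lambda>(t, c, x). (t, \<phi> c, x)) \<in> M \<rightarrow>\<^sub>M M"
    unfolding M_def
  proof (rule measurable_restrict_space3)
    show "(\<lambda>(t, c, x::real^'d). (t::real, \<phi> c, x)) \<in> borel_measurable borel"
      unfolding borel_prod[symmetric] by measurable
  qed (auto simp: pos)
  from measurable_compose[OF this u] show ?thesis by (simp add: case_prod_beta')
qed

lemma U2_inada: "u \<in> U2 \<Longrightarrow> t \<in> {0..1} \<Longrightarrow> inada (\<lambda>c. u t c x)"
  unfolding U2_def U1_def by auto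

lemma U2_has_derivative_c:
  assumes "u \<in> U2" "t \<in> {0..1}" "0 < c"
  shows "((\<lambda>c. u t c x) has_real_derivative u_c u t c x) (at c)"
  using U2_inada[OF assms(1,2), of x] assms(3)
  unfolding inada_def u_c_def by (simp add: DERIV_deriv_iff_real_differentiable)

lemma U2_u_c_has_derivative_c:
  assumes "u \<in> U2" "t \<in> {0..1}" "0 < c"
  shows "((\<lambda>c. u_c u t c x) has_real_derivative u_cc u t c x) (at c)"
  using assms unfolding U2_def u_cc_def by (simp add: DERIV_deriv_iff_real_differentiable)

lemma U2_u_c_has_derivative_x:
  assumes "u \<in> U2" "t \<in> {0..1}" "0 < c"
  shows "((\<lambda>s. u_c u t c (x + s *\<^sub>R axis i 1)) has_real_derivative u_cx u i t c x) (at 0)"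
  using assms unfolding U2_def u_cx_def by (simp add: DERIV_deriv_iff_real_differentiable)

lemma U2_u_cc_neg: "u \<in> U2 \<Longrightarrow> t \<in> {0..1} \<Longrightarrow> 0 < c \<Longrightarrow> u_cc u t c x < 0"
  unfolding U2_def by auto

lemma U2_isCont_u_cc:
  "u \<in> U2 \<Longrightarrow> t \<in> {0..1} \<Longrightarrow> 0 < c0 \<Longrightarrow> isCont (\<lambda>p. u_cc u t (fst p) (snd p)) (c0, x0)"
  by (rule isCont_at_pos) (auto simp: U2_def)

lemma U2_isCont_u_cx:
  "u \<in> U2 \<Longrightarrow> t \<in> {0..1} \<Longrightarrow> 0 < c0 \<Longrightarrow> isCont (\<lambda>p. u_cx u i t (fst p) (snd p)) (c0, x0)"
  by (rule isCont_at_pos) (auto simp: U2_def)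

lemma U2_inada_utility:
  assumes "u \<in> U2" "t \<in> {0..1}"
  shows "inada_utility (\<lambda>c. u t c x) (\<lambda>c. u_c u t c x) (\<lambda>c. u_cc u t c x)"
proof
  show "continuous_on {0<..} (\<lambda>c. u_cc u t c x)"
  proof (intro continuous_at_imp_continuous_on ballI)
    fix c :: real assume "c \<in> {0<..}"
    then show "isCont (\<lambda>c. u_cc u t c x) c"
      using isCont_compose_pair[where \<alpha>="\<lambda>c. c" and \<beta>="\<lambda>c. x", OF U2_isCont_u_cc[OF assms, of c x]]
      by simp
  qed
  have "deriv (\<lambda>c. u t c x) = (\<lambda>c. u_c u t c x)" by (simp add: u_c_def fun_eq_iff)
  then show "filterlim (\<lambda>c. u_c u t c x) at_top (at_right 0)" "((\<lambda>c. u_c u t c x) \<longlongrightarrow> 0) at_top"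
    "strictly_concave_on {0<..} (\<lambda>c. u t c x)"
    using U2_inada[OF assms, of x] unfolding inada_def by auto
next
  fix c :: real assume "0 < c"
  then show "((\<lambda>c. u t c x) has_real_derivative u_c u t c x) (at c)"
    and "((\<lambda>c. u_c u t c x) has_real_derivative u_cc u t c x) (at c)" and "u_cc u t c x < 0"
    using U2_has_derivative_c U2_u_c_has_derivative_c U2_u_cc_neg assms by blast+
qed

lemma U2_isCont_u_c:
  assumes "u \<in> U2" "t \<in> {0..1}" "0 < c0"
  shows "isCont (\<lambda>p. u_c u t (fst p) (snd p)) (c0, x0)"
proof (rule isCont_by_partials[where S="{0<..}" and hx="\<lambda>i c x. u_cx u i t c x"])
  show "isCont (\<lambda>c. u_c u t c x0) c0"
    using DERIV_isCont[OF U2_u_c_has_derivative_c[OF assms]] .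
  show "((\<lambda>s. u_c u t c (x + s *\<^sub>R axis i 1)) has_real_derivative u_cx u i t c x) (at 0)"
    if "c \<in> {0<..}" for c x i
    using that by (intro U2_u_c_has_derivative_x assms(1,2)) simp
  show "isCont (\<lambda>p. u_cx u i t (fst p) (snd p)) (c0, x0)" for i
    by (rule U2_isCont_u_cx[OF assms])
qed (use assms in auto)

lemma U2_ratio_bound:
  "u \<in> U2 \<Longrightarrow> \<exists>N>0. \<forall>t\<in>{0..1}. \<forall>c>0. \<forall>x i.
     - c * u_cc u t c x / u_c u t c x + \<bar>u_cx u i t c x\<bar> / u_c u t c x \<le> N"
  unfolding U2_def by blast

lemma U2_exp_growth_half:
  assumes "u \<in> U2"
  obtains N where "0 < N"
    and "\<And>t x y. t \<in> {0..1} \<Longrightarrow>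
      \<bar>u t (exp y) x\<bar> + \<bar>u t (exp y / 2) x\<bar> \<le> 2 * exp (N * (1 + norm x + \<bar>y\<bar>))"
proof -
  have "\<exists>N>0. \<forall>t\<in>{0..1}. \<forall>x y. \<bar>u t (exp y) x\<bar> \<le> exp (N * (1 + norm x + \<bar>y\<bar>))"
    using assms unfolding U2_def U1_def by blast
  then obtain N where "N > 0" and N: "\<And>t x y. t \<in> {0..1} \<Longrightarrow> \<bar>u t (exp y) x\<bar> \<le> exp (N * (1 + norm x + \<bar>y\<bar>))"
    by blast
  have shift: "\<bar>u t (exp y') x\<bar> \<le> exp (2 * N * (1 + norm x + \<bar>y\<bar>))"
    if "t \<in> {0..1}" "\<bar>y' - y\<bar> \<le> 1" for t x y y'
  proof -
    have "\<bar>y'\<bar> \<le> \<bar>y\<bar> + 1" using that(2) by arith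
    then have "1 + norm x + \<bar>y'\<bar> \<le> 2 * (1 + norm x + \<bar>y\<bar>)"
      by (simp add: algebra_simps) (use norm_ge_zero[of x] abs_ge_zero[of y] in linarith)
    then have "N * (1 + norm x + \<bar>y'\<bar>) \<le> N * (2 * (1 + norm x + \<bar>y\<bar>))"
      by (rule mult_left_mono) (use \<open>N > 0\<close> in simp)
    then have "exp (N * (1 + norm x + \<bar>y'\<bar>)) \<le> exp (2 * N * (1 + norm x + \<bar>y\<bar>))"
      by (simp only: exp_le_cancel_iff mult.assoc mult.left_commute[of 2 N])
    with N[OF that(1)] show ?thesis by (rule order_trans)
  qed
  have half: "exp y / 2 = exp (y - ln 2)" for y :: real by (simp add: exp_diff)
  have "\<bar>ln (2::real)\<bar> \<le> 1" using ln_2_less_1 ln_ge_zero[of 2] by simp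
  have "\<bar>u t (exp y) x\<bar> + \<bar>u t (exp y / 2) x\<bar> \<le> 2 * exp (2 * N * (1 + norm x + \<bar>y\<bar>))"
    if "t \<in> {0..1}" for t x y
  proof -
    have "\<bar>u t (exp y) x\<bar> \<le> exp (2 * N * (1 + norm x + \<bar>y\<bar>))"
      by (rule shift[OF that]) simp
    moreover have "\<bar>u t (exp y / 2) x\<bar> \<le> exp (2 * N * (1 + norm x + \<bar>y\<bar>))"
      unfolding half by (rule shift[OF that]) (use \<open>\<bar>ln 2\<bar> \<le> 1\<close> in simp)
    ultimately show ?thesis by linarith
  qed
  then show thesis using \<open>N > 0\<close> by (intro that[of "2 * N"]) auto
qed

locale U2_pair =
  fixes u1 u2 :: "real \<Rightarrow> real \<Rightarrow> real^'d \<Rightarrow> real"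
  assumes u1: "u1 \<in> U2" and u2: "u2 \<in> U2"
begin

abbreviation share :: "real \<Rightarrow> real \<Rightarrow> real^'d \<Rightarrow> real" where
  "share t c x \<equiv> split_point (\<lambda>a. u_c u1 t a x) (\<lambda>a. u_c u2 t a x) c"

lemma inada_pair_at:
  "t \<in> {0..1} \<Longrightarrow> inada_pair (\<lambda>c. u1 t c x) (\<lambda>c. u_c u1 t c x) (\<lambda>c. u_cc u1 t c x)
     (\<lambda>c. u2 t c x) (\<lambda>c. u_c u2 t c x) (\<lambda>c. u_cc u2 t c x)"
  unfolding inada_pair_def using U2_inada_utility u1 u2 by blast

lemma supconv_eq_sup_convolution:
  "supconv u1 u2 t c x = sup_convolution (\<lambda>c. u1 t c x) (\<lambda>c. u2 t c x) c"
  by (simp add: supconv_def sup_convolution_def)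

lemma share_root:
  "t \<in> {0..1} \<Longrightarrow> 0 < c \<Longrightarrow>
    0 < share t c x \<and> share t c x < c \<and> u_c u1 t (share t c x) x = u_c u2 t (c - share t c x) x"
  using inada_pair.share_root[OF inada_pair_at] by blast

lemma share_eqI:
  "t \<in> {0..1} \<Longrightarrow> 0 < f \<Longrightarrow> f < c \<Longrightarrow> u_c u1 t f x = u_c u2 t (c - f) x \<Longrightarrow> f = share t c x"
  using inada_pair.share_eqI[OF inada_pair_at] by blast

lemma u_c_supconv:
  "t \<in> {0..1} \<Longrightarrow> 0 < c \<Longrightarrow> u_c (supconv u1 u2) t c x = u_c u1 t (share t c x) x"
  using inada_pair.deriv_sup_convolution[OF inada_pair_at]
  by (simp add: u_c_def supconv_eq_sup_convolution[abs_def])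

lemma u_cc_at_share_neg:
  assumes "t \<in> {0..1}" "0 < c"
  shows "u_cc u1 t (share t c x) x < 0" "u_cc u2 t (c - share t c x) x < 0"
  using share_root[OF assms, of x] U2_u_cc_neg[OF u1 assms(1)] U2_u_cc_neg[OF u2 assms(1)] by auto

lemma u_c_supconv_has_derivative_c:
  assumes t: "t \<in> {0..1}" and "0 < c"
  shows "((\<lambda>c. u_c (supconv u1 u2) t c x) has_real_derivative
    u_cc u1 t (share t c x) x * u_cc u2 t (c - share t c x) x /
      (u_cc u1 t (share t c x) x + u_cc u2 t (c - share t c x) x)) (at c)"
proof (rule has_field_derivative_transform_within_open[where S="{0<..}"])
  show "((\<lambda>c. u_c u1 t (share t c x) x) has_real_derivative
    u_cc u1 t (share t c x) x * u_cc u2 t (c - share t c x) x /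
      (u_cc u1 t (share t c x) x + u_cc u2 t (c - share t c x) x)) (at c)"
    using inada_pair.v1'_share_has_derivative[OF inada_pair_at[OF t] \<open>0 < c\<close>] by simp
qed (use \<open>0 < c\<close> u_c_supconv[OF t] in auto)

lemma u_cc_supconv:
  "t \<in> {0..1} \<Longrightarrow> 0 < c \<Longrightarrow> u_cc (supconv u1 u2) t c x =
    u_cc u1 t (share t c x) x * u_cc u2 t (c - share t c x) x /
      (u_cc u1 t (share t c x) x + u_cc u2 t (c - share t c x) x)"
  unfolding u_cc_def[of "supconv u1 u2"] by (rule DERIV_imp_deriv) (rule u_c_supconv_has_derivative_c)

lemma isCont_share:
  assumes t: "t \<in> {0..1}" and "0 < c0"
  shows "isCont (\<lambda>p. share t (fst p) (snd p)) (c0, x0)"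
proof -
  note decr = inada_pair.marginal_gap_strict_antimono[OF inada_pair_at[OF t]]
  have fst_lim: "(fst \<longlongrightarrow> c0) (at (c0, x0))"
    using tendsto_fst[OF tendsto_ident_at[of "(c0, x0)" UNIV]] by simp
  have "((\<lambda>p. share t (fst p) (snd p)) \<longlongrightarrow> share t c0 x0) (at (c0, x0))"
  proof (rule decreasing_root_tendsto[where \<psi>="\<lambda>p a. u_c u1 t a (snd p) - u_c u2 t (fst p - a) (snd p)"
        and \<Psi>="\<lambda>a. u_c u1 t a x0 - u_c u2 t (c0 - a) x0" and hi=fst and H=c0])
    show "0 < share t c0 x0" "share t c0 x0 < c0"
      "u_c u1 t (share t c0 x0) x0 - u_c u2 t (c0 - share t c0 x0) x0 = 0"
      using share_root[OF t \<open>0 < c0\<close>, of x0] by auto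
  next
    fix a assume "0 < a" "a < c0"
    have "isCont (\<lambda>p. u_c u1 t a (snd p)) (c0, x0)"
      by (rule isCont_compose_pos[OF U2_isCont_u_c[OF u1 t]])
        (use \<open>0 < a\<close> in \<open>auto intro: continuous_intros\<close>)
    moreover have "isCont (\<lambda>p. u_c u2 t (fst p - a) (snd p)) (c0, x0)"
      by (rule isCont_compose_pos[OF U2_isCont_u_c[OF u2 t]])
        (use \<open>a < c0\<close> in \<open>auto intro: continuous_intros\<close>)
    ultimately show "((\<lambda>p. u_c u1 t a (snd p) - u_c u2 t (fst p - a) (snd p))
        \<longlongrightarrow> u_c u1 t a x0 - u_c u2 t (c0 - a) x0) (at (c0, x0))"
      unfolding isCont_def by (intro tendsto_diff) simp_all
  next
    show "\<forall>\<^sub>F p in at (c0, x0). 0 < share t (fst p) (snd p) \<and> share t (fst p) (snd p) < fst p \<and>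
        u_c u1 t (share t (fst p) (snd p)) (snd p) - u_c u2 t (fst p - share t (fst p) (snd p)) (snd p) = 0 \<and>
        (\<forall>a b. 0 < a \<longrightarrow> a < b \<longrightarrow> b < fst p \<longrightarrow>
          u_c u1 t b (snd p) - u_c u2 t (fst p - b) (snd p) < u_c u1 t a (snd p) - u_c u2 t (fst p - a) (snd p))"
      using order_tendstoD(1)[OF fst_lim \<open>0 < c0\<close>]
      by eventually_elim (use share_root[OF t] decr in auto)
  next
    show "u_c u1 t b x0 - u_c u2 t (c0 - b) x0 < u_c u1 t a x0 - u_c u2 t (c0 - a) x0"
      if "0 < a" "a < b" "b < c0" for a b
      using decr[OF that] .
  qed (rule fst_lim)
  then show ?thesis unfolding isCont_def by simp
qed

lemma share_has_derivative_x:
  assumes t: "t \<in> {0..1}" and "0 < c"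
  shows "((\<lambda>s. share t c (x + s *\<^sub>R axis i 1)) has_real_derivative
     (u_cx u2 i t (c - share t c x) x - u_cx u1 i t (share t c x) x) /
       (u_cc u1 t (share t c x) x + u_cc u2 t (c - share t c x) x)) (at 0)"
proof -
  define f e where "f = share t c x" and "e = (axis i 1 :: real^'d)"
  have f: "0 < f" "f < c" "u_c u1 t f x = u_c u2 t (c - f) x"
    using share_root[OF t \<open>0 < c\<close>] unfolding f_def by auto
  define r where "r = min f (c - f) / 2"
  have r: "0 < r" "r < f" "2 * r \<le> c - f" using f by (auto simp: r_def)
  have "((\<lambda>s. share t c (x + s *\<^sub>R e)) has_real_derivative
     - (u_cx u1 i t f x - u_cx u2 i t (c - f) x) /
       (u_cc u1 t f (x + 0 *\<^sub>R e) + u_cc u2 t (c - f) (x + 0 *\<^sub>R e))) (at 0)"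
  proof (rule implicit_function_has_derivative
      [where G="\<lambda>b s. u_c u1 t b (x + s *\<^sub>R e) - u_c u2 t (c - b) (x + s *\<^sub>R e)"
        and Ga="\<lambda>b s. u_cc u1 t b (x + s *\<^sub>R e) + u_cc u2 t (c - b) (x + s *\<^sub>R e)", OF r(1)])
    fix b s :: real assume "\<bar>b - f\<bar> < r" "\<bar>s - 0\<bar> < r"
    then show "((\<lambda>b. u_c u1 t b (x + s *\<^sub>R e) - u_c u2 t (c - b) (x + s *\<^sub>R e)) has_real_derivative
        u_cc u1 t b (x + s *\<^sub>R e) + u_cc u2 t (c - b) (x + s *\<^sub>R e)) (at b)"
      using r inada_pair.marginal_gap_has_derivative[OF inada_pair_at[OF t], of b c] by auto
  next
    have "isCont (\<lambda>p. u_cc u1 t (fst p) (x + snd p *\<^sub>R e)) (f, 0)"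
      by (rule isCont_compose_pos[OF U2_isCont_u_cc[OF u1 t]]) (use f in \<open>auto intro: continuous_intros\<close>)
    moreover have "isCont (\<lambda>p. u_cc u2 t (c - fst p) (x + snd p *\<^sub>R e)) (f, 0)"
      by (rule isCont_compose_pos[OF U2_isCont_u_cc[OF u2 t]]) (use f in \<open>auto intro: continuous_intros\<close>)
    ultimately show "isCont (\<lambda>p. u_cc u1 t (fst p) (x + snd p *\<^sub>R e) + u_cc u2 t (c - fst p) (x + snd p *\<^sub>R e)) (f, 0)"
      by (intro continuous_intros)
  next
    have "isCont (\<lambda>s. share t c (x + s *\<^sub>R e)) 0"
      by (rule isCont_compose_pos[OF isCont_share[OF t]]) (use \<open>0 < c\<close> in \<open>auto intro: continuous_intros\<close>)
    then show "((\<lambda>s. share t c (x + s *\<^sub>R e)) \<longlongrightarrow> f) (at 0)" unfolding isCont_def f_def by simp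
  next
    show "\<forall>\<^sub>F s in at 0. u_c u1 t (share t c (x + s *\<^sub>R e)) (x + s *\<^sub>R e)
        - u_c u2 t (c - share t c (x + s *\<^sub>R e)) (x + s *\<^sub>R e) = 0"
      using share_root[OF t \<open>0 < c\<close>] by (intro always_eventually) auto
  next
    from DERIV_diff[OF U2_u_c_has_derivative_x[OF u1 t f(1)] U2_u_c_has_derivative_x[OF u2 t, of "c - f"]]
    show "((\<lambda>s. u_c u1 t f (x + s *\<^sub>R e) - u_c u2 t (c - f) (x + s *\<^sub>R e)) has_real_derivative
        u_cx u1 i t f x - u_cx u2 i t (c - f) x) (at 0)" using f unfolding e_def by simp
  next
    show "u_cc u1 t f (x + 0 *\<^sub>R e) + u_cc u2 t (c - f) (x + 0 *\<^sub>R e) \<noteq> 0"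
      using U2_u_cc_neg[OF u1 t f(1), of x] U2_u_cc_neg[OF u2 t, of "c - f" x] f by simp
  qed (use f in \<open>simp_all add: f_def\<close>)
  then show ?thesis unfolding f_def e_def by (simp add: field_simps)
qed

lemma u_c_supconv_has_derivative_x:
  assumes t: "t \<in> {0..1}" and "0 < c"
  shows "((\<lambda>s. u_c (supconv u1 u2) t c (x + s *\<^sub>R axis i 1)) has_real_derivative
     (u_cc u2 t (c - share t c x) x * u_cx u1 i t (share t c x) x
       + u_cc u1 t (share t c x) x * u_cx u2 i t (c - share t c x) x) /
       (u_cc u1 t (share t c x) x + u_cc u2 t (c - share t c x) x)) (at 0)"
proof -
  define f e where "f = share t c x" and "e = (axis i 1 :: real^'d)"
  have f: "0 < f" "f < c" using share_root[OF t \<open>0 < c\<close>] unfolding f_def by auto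
  have "((\<lambda>s. u_c u1 t (share t c (x + s *\<^sub>R e)) (x + s *\<^sub>R e)) has_real_derivative
     u_cc u1 t f (x + 0 *\<^sub>R e) * ((u_cx u2 i t (c - f) x - u_cx u1 i t f x) /
       (u_cc u1 t f x + u_cc u2 t (c - f) x)) + u_cx u1 i t f x) (at 0)"
  proof (rule partial_chain_rule[where G="\<lambda>b s. u_c u1 t b (x + s *\<^sub>R e)"
        and Ga="\<lambda>b s. u_cc u1 t b (x + s *\<^sub>R e)", OF f(1)])
    show "((\<lambda>b. u_c u1 t b (x + s *\<^sub>R e)) has_real_derivative u_cc u1 t b (x + s *\<^sub>R e)) (at b)"
      if "\<bar>b - f\<bar> < f" for b s
      using that by (intro U2_u_c_has_derivative_c[OF u1 t]) simp
    show "isCont (\<lambda>p. u_cc u1 t (fst p) (x + snd p *\<^sub>R e)) (f, 0)"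
      by (rule isCont_compose_pos[OF U2_isCont_u_cc[OF u1 t]]) (use f in \<open>auto intro: continuous_intros\<close>)
    show "((\<lambda>s. share t c (x + s *\<^sub>R e)) has_real_derivative
        (u_cx u2 i t (c - f) x - u_cx u1 i t f x) / (u_cc u1 t f x + u_cc u2 t (c - f) x)) (at 0)"
      using share_has_derivative_x[OF t \<open>0 < c\<close>, of x i] unfolding f_def e_def .
    show "((\<lambda>s. u_c u1 t f (x + s *\<^sub>R e)) has_real_derivative u_cx u1 i t f x) (at 0)"
      unfolding e_def by (rule U2_u_c_has_derivative_x[OF u1 t f(1)])
  qed (simp add: f_def)
  moreover have "u_c (supconv u1 u2) t c (x + s *\<^sub>R e) = u_c u1 t (share t c (x + s *\<^sub>R e)) (x + s *\<^sub>R e)" for s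
    by (rule u_c_supconv[OF t \<open>0 < c\<close>])
  moreover have "u_cc u1 t f x + u_cc u2 t (c - f) x \<noteq> 0"
    using u_cc_at_share_neg[OF t \<open>0 < c\<close>, of x] by (simp add: f_def)
  ultimately show ?thesis unfolding f_def e_def by (simp add: field_simps)
qed

lemma u_cx_supconv:
  "t \<in> {0..1} \<Longrightarrow> 0 < c \<Longrightarrow> u_cx (supconv u1 u2) i t c x =
     (u_cc u2 t (c - share t c x) x * u_cx u1 i t (share t c x) x
       + u_cc u1 t (share t c x) x * u_cx u2 i t (c - share t c x) x) /
       (u_cc u1 t (share t c x) x + u_cc u2 t (c - share t c x) x)"
  unfolding u_cx_def[of "supconv u1 u2"] by (rule DERIV_imp_deriv) (rule u_c_supconv_has_derivative_x)

lemma isCont_at_share: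
  fixes g :: "real \<Rightarrow> real^'d \<Rightarrow> real"
  assumes t: "t \<in> {0..1}" and "0 < c0"
    and g: "\<And>c y. 0 < c \<Longrightarrow> isCont (\<lambda>q. g (fst q) (snd q)) (c, y)"
  shows "isCont (\<lambda>p. g (share t (fst p) (snd p)) (snd p)) (c0, x0)"
    and "isCont (\<lambda>p. g (fst p - share t (fst p) (snd p)) (snd p)) (c0, x0)"
  using isCont_share[OF t \<open>0 < c0\<close>] share_root[OF t \<open>0 < c0\<close>, of x0]
  by (auto intro!: isCont_compose_pos[OF g] continuous_intros)

lemma isCont_u_cc_supconv:
  assumes t: "t \<in> {0..1}" and "0 < c0"
  shows "isCont (\<lambda>p. u_cc (supconv u1 u2) t (fst p) (snd p)) (c0, x0)"
proof (rule isCont_pos_cong[OF \<open>0 < c0\<close> u_cc_supconv[OF t]])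
  have "u_cc u1 t (share t c0 x0) x0 + u_cc u2 t (c0 - share t c0 x0) x0 \<noteq> 0"
    using u_cc_at_share_neg[OF t \<open>0 < c0\<close>, of x0] by simp
  then show "isCont (\<lambda>p. u_cc u1 t (share t (fst p) (snd p)) (snd p) * u_cc u2 t (fst p - share t (fst p) (snd p)) (snd p) /
      (u_cc u1 t (share t (fst p) (snd p)) (snd p) + u_cc u2 t (fst p - share t (fst p) (snd p)) (snd p))) (c0, x0)"
    using isCont_at_share[OF t \<open>0 < c0\<close> U2_isCont_u_cc[OF u1 t]]
      isCont_at_share[OF t \<open>0 < c0\<close> U2_isCont_u_cc[OF u2 t]]
    by (intro continuous_intros) auto
qed

lemma isCont_u_cx_supconv:
  assumes t: "t \<in> {0..1}" and "0 < c0"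
  shows "isCont (\<lambda>p. u_cx (supconv u1 u2) i t (fst p) (snd p)) (c0, x0)"
proof (rule isCont_pos_cong[OF \<open>0 < c0\<close> u_cx_supconv[OF t]])
  have "u_cc u1 t (share t c0 x0) x0 + u_cc u2 t (c0 - share t c0 x0) x0 \<noteq> 0"
    using u_cc_at_share_neg[OF t \<open>0 < c0\<close>, of x0] by simp
  then show "isCont (\<lambda>p. (u_cc u2 t (fst p - share t (fst p) (snd p)) (snd p) * u_cx u1 i t (share t (fst p) (snd p)) (snd p)
      + u_cc u1 t (share t (fst p) (snd p)) (snd p) * u_cx u2 i t (fst p - share t (fst p) (snd p)) (snd p)) /
      (u_cc u1 t (share t (fst p) (snd p)) (snd p) + u_cc u2 t (fst p - share t (fst p) (snd p)) (snd p))) (c0, x0)"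
    using isCont_at_share[OF t \<open>0 < c0\<close> U2_isCont_u_cc[OF u1 t]]
      isCont_at_share[OF t \<open>0 < c0\<close> U2_isCont_u_cc[OF u2 t]]
      isCont_at_share[OF t \<open>0 < c0\<close> U2_isCont_u_cx[OF u1 t]]
      isCont_at_share[OF t \<open>0 < c0\<close> U2_isCont_u_cx[OF u2 t]]
    by (intro continuous_intros) auto
qed

lemma u_cc_supconv_neg: "t \<in> {0..1} \<Longrightarrow> 0 < c \<Longrightarrow> u_cc (supconv u1 u2) t c x < 0"
  using u_cc_supconv u_cc_at_share_neg[of t c x]
  by (simp add: mult_neg_neg divide_pos_neg)

lemma supconv_ratio_bound:
  "\<exists>N>0. \<forall>t\<in>{0..1}. \<forall>c>0. \<forall>x i.
     - c * u_cc (supconv u1 u2) t c x / u_c (supconv u1 u2) t c x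
       + \<bar>u_cx (supconv u1 u2) i t c x\<bar> / u_c (supconv u1 u2) t c x \<le> N"
proof -
  obtain N1 where "N1 > 0" and N1: "\<And>t c x i. t \<in> {0..1} \<Longrightarrow> 0 < c \<Longrightarrow>
      - c * u_cc u1 t c x / u_c u1 t c x + \<bar>u_cx u1 i t c x\<bar> / u_c u1 t c x \<le> N1"
    using U2_ratio_bound[OF u1] by blast
  obtain N2 where "N2 > 0" and N2: "\<And>t c x i. t \<in> {0..1} \<Longrightarrow> 0 < c \<Longrightarrow>
      - c * u_cc u2 t c x / u_c u2 t c x + \<bar>u_cx u2 i t c x\<bar> / u_c u2 t c x \<le> N2"
    using U2_ratio_bound[OF u2] by blast
  have "- c * u_cc (supconv u1 u2) t c x / u_c (supconv u1 u2) t c x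
      + \<bar>u_cx (supconv u1 u2) i t c x\<bar> / u_c (supconv u1 u2) t c x \<le> N1 + N2"
    if t: "t \<in> {0..1}" and "0 < c" for t c x i
  proof -
    define f where "f = share t c x"
    have f: "0 < f" "0 < c - f" "u_c u1 t f x = u_c u2 t (c - f) x"
      using share_root[OF t \<open>0 < c\<close>, of x] unfolding f_def by auto
    interpret O1: inada_utility "\<lambda>c. u1 t c x" "\<lambda>c. u_c u1 t c x" "\<lambda>c. u_cc u1 t c x"
      by (rule U2_inada_utility[OF u1 t])
    have A: "u_cc u1 t f x < 0" and B: "u_cc u2 t (c - f) x < 0" and D: "0 < u_c u1 t f x"
      using U2_u_cc_neg[OF u1 t f(1)] U2_u_cc_neg[OF u2 t f(2)] O1.v'_pos[OF f(1)] by auto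
    have h1: "- f * u_cc u1 t f x / u_c u1 t f x + \<bar>u_cx u1 i t f x\<bar> / u_c u1 t f x \<le> N1"
      using N1[OF t f(1)] by simp
    have h2: "- (c - f) * u_cc u2 t (c - f) x / u_c u1 t f x + \<bar>u_cx u2 i t (c - f) x\<bar> / u_c u1 t f x \<le> N2"
      using N2[OF t f(2)] f(3) by simp
    have "u_c (supconv u1 u2) t c x = u_c u1 t f x"
      "u_cc (supconv u1 u2) t c x = u_cc u1 t f x * u_cc u2 t (c - f) x / (u_cc u1 t f x + u_cc u2 t (c - f) x)"
      "u_cx (supconv u1 u2) i t c x = (u_cc u2 t (c - f) x * u_cx u1 i t f x + u_cc u1 t f x * u_cx u2 i t (c - f) x)
          / (u_cc u1 t f x + u_cc u2 t (c - f) x)"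
      using u_c_supconv[OF t \<open>0 < c\<close>] u_cc_supconv[OF t \<open>0 < c\<close>] u_cx_supconv[OF t \<open>0 < c\<close>]
      unfolding f_def by simp_all
    moreover have "f + (c - f) = c" by simp
    ultimately show ?thesis
      using harmonic_ratio_bound[OF A B D f(1,2) h1 h2] by (simp only:)
  qed
  then show ?thesis using \<open>N1 > 0\<close> \<open>N2 > 0\<close> add_pos_pos by blast
qed

lemma supconv_exp_growth:
  "\<exists>N>0. \<forall>t\<in>{0..1}. \<forall>x y. \<bar>supconv u1 u2 t (exp y) x\<bar> \<le> exp (N * (1 + norm x + \<bar>y\<bar>))"
proof -
  obtain N1 N2 where "0 < N1" "0 < N2"
    and N1: "\<And>t x y. t \<in> {0..1} \<Longrightarrow>
      \<bar>u1 t (exp y) x\<bar> + \<bar>u1 t (exp y / 2) x\<bar> \<le> 2 * exp (N1 * (1 + norm x + \<bar>y\<bar>))"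
    and N2: "\<And>t x y. t \<in> {0..1} \<Longrightarrow>
      \<bar>u2 t (exp y) x\<bar> + \<bar>u2 t (exp y / 2) x\<bar> \<le> 2 * exp (N2 * (1 + norm x + \<bar>y\<bar>))"
    using U2_exp_growth_half[OF u1] U2_exp_growth_half[OF u2] by metis
  have "\<bar>supconv u1 u2 t (exp y) x\<bar> \<le> exp ((N1 + N2 + 3) * (1 + norm x + \<bar>y\<bar>))"
    if t: "t \<in> {0..1}" for t x y
  proof -
    define L where "L = 1 + norm x + \<bar>y\<bar>"
    have "1 \<le> L" by (simp add: L_def)
    interpret P: inada_pair "\<lambda>c. u1 t c x" "\<lambda>c. u_c u1 t c x" "\<lambda>c. u_cc u1 t c x"
      "\<lambda>c. u2 t c x" "\<lambda>c. u_c u2 t c x" "\<lambda>c. u_cc u2 t c x"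
      by (rule inada_pair_at[OF t])
    have "supconv u1 u2 t (exp y) x \<le> u1 t (exp y) x + u2 t (exp y) x"
      "u1 t (exp y / 2) x + u2 t (exp y / 2) x \<le> supconv u1 u2 t (exp y) x"
      using P.sup_convolution_le[of "exp y"] P.sup_convolution_ge_half[of "exp y"]
      by (simp_all add: supconv_eq_sup_convolution)
    then have "\<bar>supconv u1 u2 t (exp y) x\<bar>
        \<le> (\<bar>u1 t (exp y) x\<bar> + \<bar>u1 t (exp y / 2) x\<bar>) + (\<bar>u2 t (exp y) x\<bar> + \<bar>u2 t (exp y / 2) x\<bar>)"
      by arith
    also have "\<dots> \<le> 2 * exp (N1 * L) + 2 * exp (N2 * L)"
      using N1[OF t, where x=x and y=y] N2[OF t, where x=x and y=y] unfolding L_def by linarith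
    also have "\<dots> \<le> 4 * exp ((N1 + N2) * L)"
    proof -
      have "exp (N1 * L) \<le> exp ((N1 + N2) * L)" "exp (N2 * L) \<le> exp ((N1 + N2) * L)"
        unfolding exp_le_cancel_iff using \<open>1 \<le> L\<close> \<open>0 < N1\<close> \<open>0 < N2\<close>
        by (auto intro!: mult_right_mono)
      then show ?thesis by linarith
    qed
    also have "\<dots> \<le> exp (3 * L) * exp ((N1 + N2) * L)"
    proof (rule mult_right_mono)
      show "4 \<le> exp (3 * L)" using exp_ge_add_one_self[of "3 * L"] \<open>1 \<le> L\<close> by linarith
    qed simp
    also have "\<dots> = exp ((N1 + N2 + 3) * L)" by (simp add: exp_add[symmetric] algebra_simps)
    finally show ?thesis unfolding L_def .
  qed
  moreover have "0 < N1 + N2 + 3" using \<open>0 < N1\<close> \<open>0 < N2\<close> by simp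
  ultimately show ?thesis by blast
qed

lemma supconv_measurable:
  "(\<lambda>(t, c, x). supconv u1 u2 t c x) \<in> borel_measurable (restrict_space borel ({0..1} \<times> {0<..} \<times> UNIV))"
    (is "_ \<in> borel_measurable ?M")
proof -
  have meas: "(\<lambda>(t, c, x). u t c x) \<in> borel_measurable ?M" if "u \<in> U2" for u :: "real \<Rightarrow> real \<Rightarrow> real^'d \<Rightarrow> real"
    using that unfolding U2_def U1_def by blast
  define W where "W q = (\<lambda>(t, c, x). u1 t (clip_share q c) x + u2 t (c - clip_share q c) x)" for q
  have W: "W q \<in> borel_measurable ?M" for q
  proof -
    have "(\<lambda>(t, c, x). u1 t (clip_share q c) x) \<in> borel_measurable ?M"
      by (rule measurable_reparam_consumption[OF meas[OF u1]]) (simp_all add: clip_share_bounds)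
    moreover have "(\<lambda>(t, c, x). u2 t (c - clip_share q c) x) \<in> borel_measurable ?M"
      by (rule measurable_reparam_consumption[OF meas[OF u2]]) (simp_all add: clip_share_bounds)
    ultimately have "(\<lambda>\<omega>. (\<lambda>(t, c, x). u1 t (clip_share q c) x) \<omega> + (\<lambda>(t, c, x). u2 t (c - clip_share q c) x) \<omega>)
        \<in> borel_measurable ?M"
      by (rule borel_measurable_add)
    then show ?thesis by (simp add: W_def case_prod_beta')
  qed
  have SUP: "supconv u1 u2 t c x = (SUP q\<in>\<rat>. W q (t, c, x))" and bdd: "bdd_above ((\<lambda>q. W q (t, c, x)) ` \<rat>)"
    if "(t, c, x) \<in> space ?M" for t c x
  proof -
    have t: "t \<in> {0..1}" and "0 < c" using that by (auto simp: space_restrict_space)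
    interpret P: inada_pair "\<lambda>c. u1 t c x" "\<lambda>c. u_c u1 t c x" "\<lambda>c. u_cc u1 t c x"
      "\<lambda>c. u2 t c x" "\<lambda>c. u_c u2 t c x" "\<lambda>c. u_cc u2 t c x"
      by (rule inada_pair_at[OF t])
    have Weq: "W q (t, c, x) = u1 t (clip_share q c) x + u2 t (c - clip_share q c) x" for q
      by (simp add: W_def)
    show "supconv u1 u2 t c x = (SUP q\<in>\<rat>. W q (t, c, x))"
      unfolding Weq supconv_eq_sup_convolution by (rule P.sup_convolution_SUP_Rats[OF \<open>0 < c\<close>])
    have "W q (t, c, x) \<le> supconv u1 u2 t c x" for q
      unfolding Weq supconv_eq_sup_convolution
      using P.sup_convolution_ge clip_share_bounds[OF \<open>0 < c\<close>] by blast
    then show "bdd_above ((\<lambda>q. W q (t, c, x)) ` \<rat>)" unfolding bdd_above_def by blast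
  qed
  have "(\<lambda>\<omega>. SUP q\<in>\<rat>. W q \<omega>) \<in> borel_measurable ?M"
    by (rule borel_measurable_cSUP[OF countable_rat W]) (use bdd in auto)
  then show ?thesis
    by (rule measurable_cong[THEN iffD1, rotated]) (use SUP in auto)
qed

lemma supconv_in_U2: "supconv u1 u2 \<in> U2"
  unfolding U2_def U1_def
proof (intro CollectI conjI ballI allI impI)
  show "(\<lambda>(t, c, x). supconv u1 u2 t c x) \<in> borel_measurable (restrict_space borel ({0..1} \<times> {0<..} \<times> UNIV))"
    by (rule supconv_measurable)
  show "inada (\<lambda>c. supconv u1 u2 t c x)" if "t \<in> {0..1}" for t x
    using inada_pair.inada_sup_convolution[OF inada_pair_at[OF that]]
    by (simp add: supconv_eq_sup_convolution[abs_def])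
  show "\<exists>N>0. \<forall>t\<in>{0..1}. \<forall>x y. \<bar>supconv u1 u2 t (exp y) x\<bar> \<le> exp (N * (1 + norm x + \<bar>y\<bar>))"
    by (rule supconv_exp_growth)
  show "\<exists>N>0. \<forall>t\<in>{0..1}. \<forall>c>0. \<forall>x i. - c * u_cc (supconv u1 u2) t c x / u_c (supconv u1 u2) t c x
      + \<bar>u_cx (supconv u1 u2) i t c x\<bar> / u_c (supconv u1 u2) t c x \<le> N"
    by (rule supconv_ratio_bound)
  fix t :: real assume t: "t \<in> {0..1}"
  show "(\<lambda>c'. u_c (supconv u1 u2) t c' x) differentiable at c"
    and "(\<lambda>s. u_c (supconv u1 u2) t c (x + s *\<^sub>R axis i 1)) differentiable at 0"
    and "u_cc (supconv u1 u2) t c x < 0" if "0 < c" for c x i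
    using u_c_supconv_has_derivative_c[OF t that] u_c_supconv_has_derivative_x[OF t that]
      u_cc_supconv_neg[OF t that] by (auto simp: real_differentiable_def)
  show "continuous_on ({0<..} \<times> UNIV) (\<lambda>(c, x). u_cc (supconv u1 u2) t c x)"
    and "continuous_on ({0<..} \<times> UNIV) (\<lambda>(c, x). u_cx (supconv u1 u2) i t c x)" for i
    using isCont_u_cc_supconv[OF t] isCont_u_cx_supconv[OF t]
    by (auto intro!: continuous_at_imp_continuous_on simp: case_prod_beta')
qed

lemma marginal_split_unique:
  assumes t: "t \<in> {0..1}" and "0 < c"
  shows "\<exists>!f. 0 < f \<and> f < c \<and> u_c (supconv u1 u2) t c x = u_c u1 t f x
    \<and> u_c (supconv u1 u2) t c x = u_c u2 t (c - f) x"
proof (rule ex1I[of _ "share t c x"])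
  show "0 < share t c x \<and> share t c x < c \<and> u_c (supconv u1 u2) t c x = u_c u1 t (share t c x) x
      \<and> u_c (supconv u1 u2) t c x = u_c u2 t (c - share t c x) x"
    using share_root[OF t \<open>0 < c\<close>, of x] u_c_supconv[OF t \<open>0 < c\<close>, of x] by simp
qed (use share_eqI[OF t] in auto)

lemma supconv_ratio_identities:
  assumes t: "t \<in> {0..1}" and "0 < c"
    and f: "0 < f" "f < c" "u_c (supconv u1 u2) t c x = u_c u1 t f x" "u_c (supconv u1 u2) t c x = u_c u2 t (c - f) x"
  shows "u_c (supconv u1 u2) t c x / u_cc (supconv u1 u2) t c x
      = u_c u1 t f x / u_cc u1 t f x + u_c u2 t (c - f) x / u_cc u2 t (c - f) x"
    and "u_cx (supconv u1 u2) i t c x / u_cc (supconv u1 u2) t c x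
      = u_cx u1 i t f x / u_cc u1 t f x + u_cx u2 i t (c - f) x / u_cc u2 t (c - f) x"
proof -
  have f_eq: "f = share t c x" using f share_eqI[OF t] by auto
  have A: "u_cc u1 t f x < 0" and B: "u_cc u2 t (c - f) x < 0"
    using u_cc_at_share_neg[OF t \<open>0 < c\<close>, of x] f_eq by auto
  then have nz: "u_cc u1 t f x \<noteq> 0" "u_cc u2 t (c - f) x \<noteq> 0" "u_cc u1 t f x + u_cc u2 t (c - f) x \<noteq> 0"
    by auto
  have cc: "u_cc (supconv u1 u2) t c x = u_cc u1 t f x * u_cc u2 t (c - f) x / (u_cc u1 t f x + u_cc u2 t (c - f) x)"
    using u_cc_supconv[OF t \<open>0 < c\<close>, of x] unfolding f_eq .
  have cx: "u_cx (supconv u1 u2) i t c x = (u_cc u2 t (c - f) x * u_cx u1 i t f x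
      + u_cc u1 t f x * u_cx u2 i t (c - f) x) / (u_cc u1 t f x + u_cc u2 t (c - f) x)"
    using u_cx_supconv[OF t \<open>0 < c\<close>, of i x] unfolding f_eq .
  show "u_c (supconv u1 u2) t c x / u_cc (supconv u1 u2) t c x
      = u_c u1 t f x / u_cc u1 t f x + u_c u2 t (c - f) x / u_cc u2 t (c - f) x"
    unfolding cc f(3) f(4)[symmetric, unfolded f(3)] by (rule harmonic_ratio_identities(1)[OF nz])
  show "u_cx (supconv u1 u2) i t c x / u_cc (supconv u1 u2) t c x
      = u_cx u1 i t f x / u_cc u1 t f x + u_cx u2 i t (c - f) x / u_cc u2 t (c - f) x"
    unfolding cc cx by (rule harmonic_ratio_identities(2)[OF nz])
qed

end

theorem lemma5:
  fixes u1 u2 :: "real \<Rightarrow> real \<Rightarrow> real^'d \<Rightarrow> real"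
  assumes "u1 \<in> U2" and "u2 \<in> U2"
  defines "u \<equiv> supconv u1 u2"
  shows "u \<in> U2 \<and>
    (\<forall>t\<in>{0..1}. \<forall>c>0. \<forall>x.
       (\<exists>!f. 0 < f \<and> f < c \<and> u_c u t c x = u_c u1 t f x \<and> u_c u t c x = u_c u2 t (c - f) x) \<and>
       (\<forall>f. 0 < f \<and> f < c \<and> u_c u t c x = u_c u1 t f x \<and> u_c u t c x = u_c u2 t (c - f) x \<longrightarrow>
          u_c u t c x / u_cc u t c x
            = u_c u1 t f x / u_cc u1 t f x + u_c u2 t (c - f) x / u_cc u2 t (c - f) x \<and>
          (\<forall>i. u_cx u i t c x / u_cc u t c x
            = u_cx u1 i t f x / u_cc u1 t f x + u_cx u2 i t (c - f) x / u_cc u2 t (c - f) x)))"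
proof -
  interpret U2_pair u1 u2 by unfold_locales (rule assms)+
  show ?thesis
    unfolding u_def using supconv_in_U2 marginal_split_unique supconv_ratio_identities
    by (intro conjI ballI allI impI) simp_all
qed

end
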